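(* Let $n\ge2$, $1<\mathscr{P}\le n-1$, $N=\binom{n}{\mathscr{P}}$, let $0\le l<k\le N$ be integers and $p,q$ constants with $p>q-l$. Let $\varphi\in C^0(\mathbb{S}^n)$ be positive. Then the equation $$\frac{\sigma_k(\Lambda(\nabla^2u+uI))}{\sigma_l(\Lambda(\nabla^2u+uI))}=u^{p-1}(u^2+|\nabla u|^2)^{\frac{k+1-q}{2}}\varphi\quad\text{on }\mathbb{S}^n$$ has at most one positive admissible solution.
   Context: $\mathbb{S}^n$ is the unit sphere with its standard metric; $\nabla u$, $\nabla^2u$ are the gradient and covariant Hessian in a local orthonormal frame; $I$ is the identity. Let $\mathbf{I}_1,\dots,\mathbf{I}_N$ enumerate the multi-indices $1\le i_1<\dots<i_{\mathscr{P}}\le n$. For a symmetric matrix $A$ with eigenvalues $\lambda$, $\Lambda(A)=(\Lambda_{\mathbf{I}_1},\dots,\Lambda_{\mathbf{I}_N})$ with $\Lambda_{\mathbf{I}}=\lambda_{i_1}+\dots+\lambda_{i_{\mathscr{P}}}$. $\sigma_m$ is the $m$-th elementary symmetric polynomial, $\sigma_0=1$; $\Gamma_k=\{\mu\in\mathbb{R}^N:\sigma_j(\mu)>0,\ 1\le j\le k\}$. A function $u\in C^2(\mathbb{S}^n)$ is admissible if $\Lambda(\nabla^2u+uI)\in\Gamma_k$ at every point. *)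

theory Defs
  imports "HOL-Analysis.Analysis"
begin

text \<open>The unit sphere S^n is realised as sphere 0 1 in R^(n+1) = real^'m, with n = CARD('m) - 1.\<close>

definition sph_ext :: "(real^'m::finite \<Rightarrow> real) \<Rightarrow> real^'m \<Rightarrow> real" where
  "sph_ext u y = u (y /\<^sub>R norm y)"

definition ext_grad :: "(real^'m::finite \<Rightarrow> real) \<Rightarrow> real^'m \<Rightarrow> real^'m" where
  "ext_grad u y = (\<chi> i. frechet_derivative (sph_ext u) (at y) (axis i 1))"

definition ext_hess :: "(real^'m::finite \<Rightarrow> real) \<Rightarrow> real^'m \<Rightarrow> real^'m^'m" where
  "ext_hess u y = (\<chi> i j. frechet_derivative (ext_grad u) (at y) (axis j 1) $ i)"

text \<open>u is C^2 on the sphere iff its homogeneous extension is C^2 on R^(n+1) minus 0.\<close>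
definition C2_sphere :: "(real^'m::finite \<Rightarrow> real) \<Rightarrow> bool" where
  "C2_sphere u \<longleftrightarrow>
     (\<forall>y. y \<noteq> 0 \<longrightarrow> sph_ext u differentiable (at y) \<and> ext_grad u differentiable (at y))
     \<and> continuous_on (- {0}) (ext_hess u)"

text \<open>Spherical gradient (the gradient of the 0-homogeneous extension is tangent).\<close>
definition sph_grad :: "(real^'m::finite \<Rightarrow> real) \<Rightarrow> real^'m \<Rightarrow> real^'m" where
  "sph_grad u x = ext_grad u x"

definition sph_hess :: "(real^'m::finite \<Rightarrow> real) \<Rightarrow> real^'m \<Rightarrow> real^'m \<Rightarrow> real^'m \<Rightarrow> real" where
  "sph_hess u x v w = v \<bullet> (ext_hess u x *v w) - (ext_grad u x \<bullet> x) * (v \<bullet> w)"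

definition sph_A :: "(real^'m::finite \<Rightarrow> real) \<Rightarrow> real^'m \<Rightarrow> real^'m \<Rightarrow> real^'m \<Rightarrow> real" where
  "sph_A u x v w = sph_hess u x v w + u x * (v \<bullet> w)"

definition tangent_frame :: "real^'m::finite \<Rightarrow> (nat \<Rightarrow> real^'m) \<Rightarrow> bool" where
  "tangent_frame x e \<longleftrightarrow>
     (\<forall>i\<in>{1..CARD('m) - 1}. e i \<bullet> x = 0) \<and>
     (\<forall>i\<in>{1..CARD('m) - 1}. \<forall>j\<in>{1..CARD('m) - 1}. e i \<bullet> e j = (if i = j then 1 else 0))"

definition sph_eigs :: "(real^'m::finite \<Rightarrow> real) \<Rightarrow> real^'m \<Rightarrow> nat \<Rightarrow> real" where
  "sph_eigs u x = (SOME lam. \<exists>e. tangent_frame x e \<and>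
      (\<forall>i\<in>{1..CARD('m) - 1}. \<forall>j\<in>{1..CARD('m) - 1}.
          sph_A u x (e i) (e j) = (if i = j then lam i else 0)))"

text \<open>Multi-indices 1 <= i_1 < ... < i_P <= n, as P-element subsets of {1..n}.\<close>
definition multi_indices :: "nat \<Rightarrow> nat \<Rightarrow> nat set set" where
  "multi_indices n P = {I. I \<subseteq> {1..n} \<and> card I = P}"

definition Lam :: "(nat \<Rightarrow> real) \<Rightarrow> nat set \<Rightarrow> real" where
  "Lam lam I = (\<Sum>i\<in>I. lam i)"

definition esym :: "nat \<Rightarrow> ('i \<Rightarrow> real) \<Rightarrow> 'i set \<Rightarrow> real" where
  "esym m f A = (\<Sum>S\<in>{S. S \<subseteq> A \<and> card S = m}. \<Prod>i\<in>S. f i)"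

definition in_Gamma :: "nat \<Rightarrow> ('i \<Rightarrow> real) \<Rightarrow> 'i set \<Rightarrow> bool" where
  "in_Gamma k f A \<longleftrightarrow> (\<forall>j\<in>{1..k}. esym j f A > 0)"

definition admissible :: "nat \<Rightarrow> nat \<Rightarrow> (real^'m::finite \<Rightarrow> real) \<Rightarrow> bool" where
  "admissible P k u \<longleftrightarrow> C2_sphere u \<and>
     (\<forall>x\<in>sphere 0 1. in_Gamma k (Lam (sph_eigs u x)) (multi_indices (CARD('m) - 1) P))"

definition solves_eq :: "nat \<Rightarrow> nat \<Rightarrow> nat \<Rightarrow> real \<Rightarrow> real \<Rightarrow> (real^'m::finite \<Rightarrow> real)
                         \<Rightarrow> (real^'m \<Rightarrow> real) \<Rightarrow> bool" where
  "solves_eq P k l p q phi u \<longleftrightarrow>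
     (\<forall>x\<in>sphere 0 1.
        esym k (Lam (sph_eigs u x)) (multi_indices (CARD('m) - 1) P)
        / esym l (Lam (sph_eigs u x)) (multi_indices (CARD('m) - 1) P)
        = u x powr (p - 1) * ((u x)\<^sup>2 + (norm (sph_grad u x))\<^sup>2) powr ((real k + 1 - q) / 2) * phi x)"

end

theory Submission
  imports Defs "HOL-Computational_Algebra.Polynomial"
begin

text \<open>Suppose u > v somewhere and let t > 1 be the maximum of u / v on the sphere, attained at
  x0. Then t v touches u from above at x0, so \<nabla>u = t \<nabla>v there and
  \<nabla>^2 u + u I \<le> t (\<nabla>^2 v + v I) as forms on the tangent space. By Courant-Fischer the
  eigenvalues of the right-hand side dominate those of the left-hand side after a permutation, so
  the same holds for the sums \<Lambda>. Newton's inequalities make sigma_k / sigma_l increasing in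
  each entry on Gamma_k, hence the left-hand side of the equation for u at x0 is at most t^(k-l)
  times that for v, while the right-hand side is exactly t^(p+k-q) times it. So
  t^(p+k-q) \<le> t^(k-l), contradicting p > q - l. By symmetry u = v.\<close>

section \<open>Elementary symmetric functions\<close>

lemma esym_0 [simp]: "finite A \<Longrightarrow> esym 0 f A = 1"
proof -
  assume "finite A"
  then have "{S. S \<subseteq> A \<and> card S = 0} = {{}}"
    by (auto dest: finite_subset)
  then show ?thesis by (simp add: esym_def)
qed

lemma esym_eq_0_if_card_less: "finite A \<Longrightarrow> card A < m \<Longrightarrow> esym m f A = 0"
  unfolding esym_def by (auto dest: card_mono intro!: sum.neutral)

lemma esym_cong: "(\<And>i. i \<in> A \<Longrightarrow> f i = g i) \<Longrightarrow> esym m f A = esym m g A"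
  unfolding esym_def by (intro sum.cong refl prod.cong) auto

lemma subsets_card_Suc_insert:
  assumes "finite A" "a \<notin> A"
  shows "{S. S \<subseteq> insert a A \<and> card S = Suc m}
    = {S. S \<subseteq> A \<and> card S = Suc m} \<union> insert a ` {S. S \<subseteq> A \<and> card S = m}"
proof (intro set_eqI iffI)
  fix S assume S: "S \<in> {S. S \<subseteq> insert a A \<and> card S = Suc m}"
  show "S \<in> {S. S \<subseteq> A \<and> card S = Suc m} \<union> insert a ` {S. S \<subseteq> A \<and> card S = m}"
  proof (cases "a \<in> S")
    case True
    then have "S = insert a (S - {a})" "S - {a} \<in> {S. S \<subseteq> A \<and> card S = m}"
      using S assms by (auto simp: card_Diff_singleton dest: finite_subset)
    then show ?thesis by blast
  qed (use S in auto)
next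
  fix S assume "S \<in> {S. S \<subseteq> A \<and> card S = Suc m} \<union> insert a ` {S. S \<subseteq> A \<and> card S = m}"
  then show "S \<in> {S. S \<subseteq> insert a A \<and> card S = Suc m}"
    using assms by (auto intro!: card_insert_disjoint intro: finite_subset)
qed

lemma esym_insert:
  assumes "finite A" "a \<notin> A"
  shows "esym (Suc m) f (insert a A) = esym (Suc m) f A + f a * esym m f A"
proof -
  let ?X = "{S. S \<subseteq> A \<and> card S = Suc m}"
  let ?Y = "{S. S \<subseteq> A \<and> card S = m}"
  have fin: "finite ?X" "finite ?Y"
    using assms(1) by (auto intro: finite_subset[of _ "Pow A"])
  have inj: "inj_on (insert a) ?Y"
    using assms(2) by (intro inj_onI) (metis insert_ident mem_Collect_eq subsetD)
  have "esym (Suc m) f (insert a A) = (\<Sum>S\<in>?X. prod f S) + (\<Sum>S\<in>?Y. prod f (insert a S))"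
    unfolding esym_def subsets_card_Suc_insert[OF assms]
    using fin assms(2) by (subst sum.union_disjoint) (auto simp: sum.reindex[OF inj])
  also have "(\<Sum>S\<in>?Y. prod f (insert a S)) = (\<Sum>S\<in>?Y. f a * prod f S)"
    using assms by (intro sum.cong refl) (auto intro!: prod.insert intro: finite_subset)
  finally show ?thesis by (simp add: esym_def sum_distrib_left)
qed

lemma esym_remove:
  assumes "finite A" "a \<in> A"
  shows "esym (Suc m) f A = esym (Suc m) f (A - {a}) + f a * esym m f (A - {a})"
  using esym_insert[of "A - {a}" a m f] assms by (simp add: insert_absorb)

lemma bij_betw_image_subsets_card:
  assumes "bij_betw h B A"
  shows "bij_betw ((`) h) {S. S \<subseteq> B \<and> card S = m} {S. S \<subseteq> A \<and> card S = m}"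
proof -
  have inj: "inj_on h B" and img: "h ` B = A"
    using assms by (auto simp: bij_betw_def)
  have card_img: "card (h ` S) = card S" if "S \<subseteq> B" for S
    using inj that by (meson card_image inj_on_subset)
  have "bij_betw ((`) h) {S \<in> Pow B. card S = m} ((`) h ` {S \<in> Pow B. card S = m})"
    by (rule bij_betw_subset[OF bij_betw_Pow[OF assms]]) auto
  moreover have "(`) h ` {S \<in> Pow B. card S = m} = {S. S \<subseteq> A \<and> card S = m}"
  proof (intro set_eqI iffI)
    fix T assume T: "T \<in> {S. S \<subseteq> A \<and> card S = m}"
    then have "T = h ` (B \<inter> h -` T)" "B \<inter> h -` T \<subseteq> B"
      using img by auto
    then show "T \<in> (`) h ` {S \<in> Pow B. card S = m}"
      using T card_img by (metis (mono_tags, lifting) Pow_iff image_eqI mem_Collect_eq)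
  qed (use img card_img in auto)
  ultimately show ?thesis by simp
qed

lemma esym_reindex:
  assumes "bij_betw h B A"
  shows "esym m f A = esym m (f \<circ> h) B"
proof -
  have "esym m f A = (\<Sum>S\<in>{S. S \<subseteq> B \<and> card S = m}. prod f (h ` S))"
    unfolding esym_def
    by (rule sum.reindex_bij_betw[OF bij_betw_image_subsets_card[OF assms], symmetric])
  also have "\<dots> = esym m (f \<circ> h) B"
    unfolding esym_def using bij_betw_imp_inj_on[OF assms]
    by (intro sum.cong refl prod.reindex) (auto intro: inj_on_subset)
  finally show ?thesis .
qed

lemma esym_cmult: "esym m (\<lambda>i. c * f i) A = c ^ m * esym m f A"
  unfolding esym_def sum_distrib_left by (intro sum.cong refl) (simp add: prod.distrib)

lemma esym_1: "finite A \<Longrightarrow> esym 1 f A = sum f A"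
  by (induction A rule: finite_induct) (simp_all add: esym_eq_0_if_card_less esym_insert[where m = 0, simplified])

lemma esym_2: "finite A \<Longrightarrow> 2 * esym 2 f A = (sum f A)^2 - (\<Sum>i\<in>A. (f i)^2)"
proof (induction A rule: finite_induct)
  case (insert a A)
  then have "esym 2 f (insert a A) = esym 2 f A + f a * sum f A"
    using esym_insert[of A a 1 f] esym_1[of A f] by (simp add: numeral_2_eq_2)
  then show ?case using insert by (simp add: power2_eq_square algebra_simps)
qed (simp add: esym_eq_0_if_card_less)

lemma esym_2_le_esym_1_squared:
  assumes "finite A"
  shows "2 * real (card A) * esym 2 f A \<le> (real (card A) - 1) * (esym 1 f A)^2"
proof -
  have "real (card A) * (2 * esym 2 f A)
      = real (card A) * (sum f A)^2 - real (card A) * (\<Sum>i\<in>A. (f i)^2)"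
    by (simp add: esym_2[OF assms] right_diff_distrib)
  then show ?thesis
    using esym_1[OF assms, of f] sum_squared_le_sum_of_squares[of f A] by (simp add: algebra_simps)
qed

lemma esym_inverse_mult_prod:
  assumes fin: "finite A" and nz: "\<And>i. i \<in> A \<Longrightarrow> f i \<noteq> 0" and m: "m \<le> card A"
  shows "esym m (\<lambda>i. 1 / f i) A * prod f A = esym (card A - m) f A"
proof -
  let ?X = "{S. S \<subseteq> A \<and> card S = m}"
  have bij: "bij_betw (\<lambda>S. A - S) ?X {S. S \<subseteq> A \<and> card S = card A - m}"
  proof (rule bij_betw_byWitness[where f' = "\<lambda>S. A - S"])
    show "(\<lambda>S. A - S) ` ?X \<subseteq> {S. S \<subseteq> A \<and> card S = card A - m}"
      using fin by (auto simp: card_Diff_subset[OF finite_subset[OF _ fin]])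
    show "(\<lambda>S. A - S) ` {S. S \<subseteq> A \<and> card S = card A - m} \<subseteq> ?X"
      using fin m by (auto simp: card_Diff_subset[OF finite_subset[OF _ fin]])
  qed auto
  have "esym (card A - m) f A = (\<Sum>S\<in>?X. prod f (A - S))"
    unfolding esym_def by (rule sum.reindex_bij_betw[OF bij, symmetric])
  also have "\<dots> = (\<Sum>S\<in>?X. prod (\<lambda>i. 1 / f i) S * prod f A)"
  proof (intro sum.cong refl)
    fix S assume "S \<in> ?X"
    then have SA: "S \<subseteq> A" by simp
    have "prod (\<lambda>i. 1 / f i) S * prod f S = 1"
      using SA nz by (simp add: prod.distrib[symmetric] prod.neutral subset_iff)
    moreover have "prod f A = prod f S * prod f (A - S)"
      using prod.subset_diff[OF SA fin, of f] by (simp add: mult.commute)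
    ultimately show "prod f (A - S) = prod (\<lambda>i. 1 / f i) S * prod f A"
      by (metis mult.assoc mult_1)
  qed
  finally show ?thesis unfolding esym_def by (simp add: sum_distrib_right)
qed

section \<open>Newton's inequalities\<close>

definition esym_poly :: "(nat \<Rightarrow> real) \<Rightarrow> nat \<Rightarrow> real poly" where
  "esym_poly f N = (\<Prod>i<N. [:f i, 1:])"

lemma degree_esym_poly [simp]: "degree (esym_poly f N) = N"
  unfolding esym_poly_def by (subst degree_prod_eq_sum_degree) auto

lemma poly_esym_poly: "poly (esym_poly f N) t = (\<Prod>i<N. t + f i)"
  by (simp add: esym_poly_def poly_prod add.commute)

lemma coeff_esym_poly: "m \<le> N \<Longrightarrow> coeff (esym_poly f N) m = esym (N - m) f {..<N}"
proof (induction N arbitrary: m)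
  case 0
  then show ?case by (simp add: esym_poly_def)
next
  case (Suc N)
  have rec: "esym_poly f (Suc N) = smult (f N) (esym_poly f N) + pCons 0 (esym_poly f N)"
    by (simp add: esym_poly_def algebra_simps)
  have ins: "{..<Suc N} = insert N {..<N}" by auto
  show ?case
  proof (cases m)
    case 0
    then show ?thesis
      using Suc.IH[of 0] esym_insert[of "{..<N}" N N f] unfolding rec ins
      by (simp add: esym_eq_0_if_card_less)
  next
    case (Suc m')
    show ?thesis
    proof (cases "m' = N")
      case True
      then show ?thesis using Suc Suc.IH[of N] unfolding rec by (simp add: coeff_eq_0)
    next
      case False
      then have "m' < N" using Suc.prems Suc by simp
      then show ?thesis
        using Suc Suc.IH[of m'] Suc.IH[of "Suc m'"] esym_insert[of "{..<N}" N "N - Suc m'" f]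
        unfolding rec ins by (simp add: Suc_diff_Suc)
    qed
  qed
qed

text \<open>Rolle's theorem between consecutive roots of a polynomial with distinct real roots
  gives distinct real roots of its derivative, one in each gap.\<close>
lemma pderiv_esym_poly_roots:
  assumes inj: "inj_on f {..<Suc N}"
  obtains xi where "inj_on xi {..<N}" "\<And>k. k < N \<Longrightarrow> poly (pderiv (esym_poly f (Suc N))) (xi k) = 0"
proof -
  define P where "P = esym_poly f (Suc N)"
  define rs where "rs = sorted_list_of_set ((\<lambda>i. - f i) ` {..<Suc N})"
  have "inj_on (\<lambda>i. - f i) {..<Suc N}" using inj by (auto simp: inj_on_def)
  then have len: "length rs = Suc N" and srt: "sorted_wrt (<) rs" and "sorted rs"
    and set_rs: "set rs = (\<lambda>i. - f i) ` {..<Suc N}"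
    unfolding rs_def by (simp_all add: card_image)
  have root: "poly P (rs ! k) = 0" if k: "k \<le> N" for k
  proof -
    obtain i where "i < Suc N" "rs ! k = - f i"
      using nth_mem[of k rs] k len set_rs by auto
    then show ?thesis unfolding P_def poly_esym_poly by (intro prod_zero) auto
  qed
  have "\<forall>k\<in>{..<N}. \<exists>z. rs ! k < z \<and> z < rs ! Suc k \<and> poly (pderiv P) z = 0"
  proof
    fix k assume k: "k \<in> {..<N}"
    then have lt: "rs ! k < rs ! Suc k" using srt len by (simp add: sorted_wrt_nth_less)
    obtain z where "rs ! k < z" "z < rs ! Suc k"
      "poly P (rs ! Suc k) - poly P (rs ! k) = (rs ! Suc k - rs ! k) * poly (pderiv P) z"
      using poly_MVT[OF lt] by blast
    then show "\<exists>z. rs ! k < z \<and> z < rs ! Suc k \<and> poly (pderiv P) z = 0"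
      using root[of k] root[of "Suc k"] lt k by auto
  qed
  then obtain xi where xi: "\<forall>k\<in>{..<N}. rs ! k < xi k \<and> xi k < rs ! Suc k \<and> poly (pderiv P) (xi k) = 0"
    by (auto dest!: bchoice)
  have "strict_mono_on {..<N} xi"
  proof (rule strict_mono_onI)
    fix k k' assume "k \<in> {..<N}" "k' \<in> {..<N}" "k < k'"
    moreover from this have "rs ! Suc k \<le> rs ! k'"
      using \<open>sorted rs\<close> len by (simp add: sorted_nth_mono)
    moreover have "xi k < rs ! Suc k" "rs ! k' < xi k'"
      using xi calculation by auto
    ultimately show "xi k < xi k'" by linarith
  qed
  then show ?thesis using that xi unfolding P_def by (auto intro: strict_mono_on_imp_inj_on)
qed

lemma pderiv_esym_poly:
  assumes "inj_on f {..<Suc N}"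
  obtains y where "pderiv (esym_poly f (Suc N)) = smult (real (Suc N)) (esym_poly y N)"
proof -
  obtain xi where inj_xi: "inj_on xi {..<N}"
    and xi: "\<And>k. k < N \<Longrightarrow> poly (pderiv (esym_poly f (Suc N))) (xi k) = 0"
    using pderiv_esym_poly_roots[OF assms] by blast
  define y where "y = (\<lambda>k. - xi k)"
  have "pderiv (esym_poly f (Suc N)) = smult (real (Suc N)) (esym_poly y N)"
  proof (rule poly_eqI_degree_lead_coeff[where n = N and A = "xi ` {..<N}"])
    show "coeff (pderiv (esym_poly f (Suc N))) N = coeff (smult (real (Suc N)) (esym_poly y N)) N"
      unfolding coeff_pderiv by (simp add: coeff_esym_poly)
    show "N \<le> card (xi ` {..<N})" using card_image[OF inj_xi] by simp
    show "degree (pderiv (esym_poly f (Suc N))) \<le> N" by (simp add: degree_pderiv)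
    show "degree (smult (real (Suc N)) (esym_poly y N)) \<le> N" by simp
    fix z assume "z \<in> xi ` {..<N}"
    then obtain k where k: "k < N" "z = xi k" by auto
    have "(\<Prod>i<N. xi k + y i) = 0" using k unfolding y_def by (intro prod_zero) auto
    then show "poly (pderiv (esym_poly f (Suc N))) z = poly (smult (real (Suc N)) (esym_poly y N)) z"
      using xi k by (simp add: poly_esym_poly)
  qed
  then show ?thesis by (rule that)
qed

definition esym_avg :: "(nat \<Rightarrow> real) \<Rightarrow> nat \<Rightarrow> nat \<Rightarrow> real" where
  "esym_avg f N j = esym j f {..<N} / real (N choose j)"

lemma esym_avg_pderiv:
  assumes "inj_on f {..<Suc N}"
  obtains y where "\<And>j. j \<le> N \<Longrightarrow> esym_avg y N j = esym_avg f (Suc N) j"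
proof -
  obtain y where y: "pderiv (esym_poly f (Suc N)) = smult (real (Suc N)) (esym_poly y N)"
    using pderiv_esym_poly[OF assms] .
  have "esym_avg y N j = esym_avg f (Suc N) j" if j: "j \<le> N" for j
  proof -
    have "coeff (pderiv (esym_poly f (Suc N))) (N - j) = real (Suc N - j) * esym j f {..<Suc N}"
      using j by (simp add: coeff_pderiv coeff_esym_poly Suc_diff_le)
    moreover have "coeff (smult (real (Suc N)) (esym_poly y N)) (N - j) = real (Suc N) * esym j y {..<N}"
      using j by (simp add: coeff_esym_poly)
    ultimately have coeffs: "real (Suc N - j) * esym j f {..<Suc N} = real (Suc N) * esym j y {..<N}"
      by (simp only: y)
    have binom: "real (Suc N - j) * real (Suc N choose j) = real (Suc N) * real (N choose j)"
      using binomial_absorb_comp[of "Suc N" j] by (metis diff_Suc_1 of_nat_mult)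
    have "real (Suc N) * (esym j y {..<N} * real (Suc N choose j))
        = esym j f {..<Suc N} * (real (Suc N - j) * real (Suc N choose j))"
      unfolding mult.assoc[symmetric] coeffs[symmetric] by (simp add: ac_simps)
    also have "\<dots> = real (Suc N) * (esym j f {..<Suc N} * real (N choose j))"
      by (simp add: binom)
    finally have "esym j y {..<N} * real (Suc N choose j) = esym j f {..<Suc N} * real (N choose j)"
      by (rule mult_left_cancel[THEN iffD1, rotated]) simp
    moreover have "real (N choose j) \<noteq> 0" "real (Suc N choose j) \<noteq> 0" using j by auto
    ultimately show ?thesis unfolding esym_avg_def by (simp add: frac_eq_eq)
  qed
  then show ?thesis using that by blast
qed

text \<open>The last Newton inequality is the first one for the reciprocals, where it is the
  Cauchy-Schwarz inequality.\<close>
lemma esym_avg_newton_top: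
  assumes nz: "\<And>k. k < Suc (Suc n) \<Longrightarrow> f k \<noteq> 0"
  shows "esym_avg f (Suc (Suc n)) n * esym_avg f (Suc (Suc n)) (Suc (Suc n))
    \<le> (esym_avg f (Suc (Suc n)) (Suc n))^2"
proof -
  define N where "N = Suc (Suc n)"
  define g where "g k = 1 / f k" for k
  define c where "c = prod f {..<N}"
  have recip: "esym m g {..<N} * c = esym (N - m) f {..<N}" if "m \<le> N" for m
    using esym_inverse_mult_prod[of "{..<N}" f m] nz that unfolding g_def c_def N_def by simp
  have binom_n: "real (N choose n) = real N * (real N - 1) / 2"
  proof -
    have "N choose n = N choose 2" using binomial_symmetric[of 2 N] unfolding N_def by simp
    moreover have "2 * (N choose 2) = N * (N - 1)" using times_binomial_minus1_eq[of 2 N] by simp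
    ultimately have "2 * real (N choose n) = real N * real (N - 1)" by (metis of_nat_mult of_nat_numeral)
    then show ?thesis unfolding N_def by simp
  qed
  have binom_Suc_n: "N choose Suc n = N" using binomial_symmetric[of 1 N] unfolding N_def by simp
  have avg_n: "esym_avg f N n = 2 * (esym 2 g {..<N} * c) / (real N * (real N - 1))"
    unfolding esym_avg_def binom_n using recip[of 2] unfolding N_def by simp
  have avg_Suc_n: "esym_avg f N (Suc n) = esym 1 g {..<N} * c / real N"
    unfolding esym_avg_def binom_Suc_n using recip[of 1] unfolding N_def by simp
  have avg_N: "esym_avg f N N = c" unfolding esym_avg_def using recip[of 0] by simp
  have N: "real N \<noteq> 0" "real N - 1 \<noteq> 0" "real N * real N * (real N - 1) \<ge> 0"
    unfolding N_def by auto
  have "2 * (esym 2 g {..<N} * c) / (real N * (real N - 1)) * c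
      = (2 * real N * esym 2 g {..<N} * c^2) / (real N * real N * (real N - 1))"
    using N(1,2) by (simp add: field_simps power2_eq_square)
  also have "\<dots> \<le> ((real N - 1) * (esym 1 g {..<N})^2 * c^2) / (real N * real N * (real N - 1))"
    using mult_right_mono[OF esym_2_le_esym_1_squared[of "{..<N}" g], of "c^2"] N(3)
    by (intro divide_right_mono) simp_all
  also have "\<dots> = (esym 1 g {..<N} * c / real N)^2"
    using N(1,2) by (simp add: field_simps power2_eq_square)
  finally show ?thesis unfolding N_def[symmetric] avg_n avg_Suc_n avg_N .
qed

lemma exists_generic_perturbation:
  fixes f :: "nat \<Rightarrow> real"
  assumes "d > 0"
  obtains e where "0 < e" "e < d" "inj_on (\<lambda>k. f k + e * real (Suc k)) {..<N}"
    "\<And>k. k < N \<Longrightarrow> f k + e * real (Suc k) \<noteq> 0"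
proof -
  define B where "B = (\<Union>k<N. \<Union>k'<N. {(f k' - f k) / (real k - real k')})
    \<union> (\<lambda>k. - f k / real (Suc k)) ` {..<N}"
  have "finite B" unfolding B_def by simp
  then have "infinite ({0<..<d} - B)" using assms by (simp add: Diff_infinite_finite)
  then obtain e where e: "e \<in> {0<..<d}" "e \<notin> B"
    by (metis Diff_iff finite.emptyI infinite_imp_nonempty ex_in_conv)
  have "inj_on (\<lambda>k. f k + e * real (Suc k)) {..<N}"
  proof (rule inj_onI, rule ccontr)
    fix k k' assume k: "k \<in> {..<N}" "k' \<in> {..<N}" "k \<noteq> k'"
      and eq: "f k + e * real (Suc k) = f k' + e * real (Suc k')"
    then have "e * (real k - real k') = f k' - f k" by (simp add: algebra_simps)
    then have "e = (f k' - f k) / (real k - real k')" using k(3) by (simp add: field_simps)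
    then show False using e(2) k unfolding B_def by blast
  qed
  moreover have "f k + e * real (Suc k) \<noteq> 0" if "k < N" for k
  proof
    assume "f k + e * real (Suc k) = 0"
    then have "e = - f k / real (Suc k)" by (simp add: field_simps)
    then show False using e(2) that unfolding B_def by blast
  qed
  ultimately show ?thesis using e(1) that by auto
qed

lemma esym_avg_newton_of_generic:
  assumes generic: "\<And>g. inj_on g {..<N} \<Longrightarrow> (\<And>k. k < N \<Longrightarrow> g k \<noteq> 0) \<Longrightarrow>
      esym_avg g N i * esym_avg g N (i+2) \<le> (esym_avg g N (i+1))^2"
  shows "esym_avg f N i * esym_avg f N (i+2) \<le> (esym_avg f N (i+1))^2"
proof (rule ccontr)
  define fe where "fe = (\<lambda>e k. f k + e * real (Suc k))"
  define h where "h e = (esym_avg (fe e) N (i+1))^2 - esym_avg (fe e) N i * esym_avg (fe e) N (i+2)" for e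
  assume "\<not> ?thesis"
  then have "h 0 < 0" by (simp add: h_def fe_def)
  moreover have "isCont h 0"
    unfolding h_def esym_avg_def esym_def fe_def divide_inverse by (intro continuous_intros)
  ultimately have "\<forall>\<^sub>F e in at 0. h e < 0"
    unfolding isCont_def by (rule order_tendstoD(2)[rotated])
  then obtain d where "d > 0" and neg: "\<And>e. e \<noteq> 0 \<Longrightarrow> dist e 0 < d \<Longrightarrow> h e < 0"
    unfolding eventually_at by auto
  obtain e where e: "0 < e" "e < d" "inj_on (fe e) {..<N}" "\<And>k. k < N \<Longrightarrow> fe e k \<noteq> 0"
    using exists_generic_perturbation[OF \<open>d > 0\<close>, of f N] unfolding fe_def by blast
  show False using generic[OF e(3,4)] neg[of e] e(1,2) unfolding h_def by simp
qed

text \<open>Induction on N: for distinct nonzero entries the averages up to order N - 1 are those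
  of the roots of the derivative of esym_poly, the top inequality comes from the reciprocals, and
  continuity removes the genericity assumption.\<close>
theorem esym_avg_newton:
  "i + 2 \<le> N \<Longrightarrow> esym_avg f N i * esym_avg f N (i+2) \<le> (esym_avg f N (i+1))^2"
proof (induction N arbitrary: f i)
  case (Suc N)
  show ?case
  proof (rule esym_avg_newton_of_generic)
    fix g :: "nat \<Rightarrow> real" assume inj: "inj_on g {..<Suc N}" and nz: "\<And>k. k < Suc N \<Longrightarrow> g k \<noteq> 0"
    show "esym_avg g (Suc N) i * esym_avg g (Suc N) (i+2) \<le> (esym_avg g (Suc N) (i+1))^2"
    proof (cases "i + 2 \<le> N")
      case True
      obtain y where "\<And>j. j \<le> N \<Longrightarrow> esym_avg y N j = esym_avg g (Suc N) j"
        using esym_avg_pderiv[OF inj] by blast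
      then show ?thesis using Suc.IH[OF True, of y] True by simp
    next
      case False
      then have "N = Suc i" using Suc.prems by simp
      then show ?thesis using esym_avg_newton_top[of i g] nz by simp
    qed
  qed
qed simp

lemma binomial_log_concave:
  assumes "i + 2 \<le> N"
  shows "real (N choose i) * real (N choose (i+2)) \<le> (real (N choose (i+1)))^2"
proof -
  have a1: "real (Suc i) * real (N choose Suc i) = real (N - i) * real (N choose i)"
    using binomial_absorption[of i N] binomial_absorb_comp[of N i] by (metis of_nat_mult)
  have a2: "real (Suc (Suc i)) * real (N choose Suc (Suc i)) = real (N - Suc i) * real (N choose Suc i)"
    using binomial_absorption[of "Suc i" N] binomial_absorb_comp[of N "Suc i"] by (metis of_nat_mult)
  define X where "X = real (N - i) * real (Suc (Suc i))"
  have "X > 0" unfolding X_def using assms by simp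
  have "(real (N choose i) * real (N choose (i+2))) * X
      = (real (N - i) * real (N choose i)) * (real (Suc (Suc i)) * real (N choose Suc (Suc i)))"
    unfolding X_def by (simp add: algebra_simps)
  also have "\<dots> = (real (Suc i) * real (N - Suc i)) * (real (N choose (i+1)))^2"
    unfolding a1[symmetric] a2 by (simp add: power2_eq_square algebra_simps)
  also have "\<dots> \<le> X * (real (N choose (i+1)))^2"
    using assms unfolding X_def by (intro mult_right_mono) (simp_all add: of_nat_diff algebra_simps)
  finally show ?thesis using \<open>X > 0\<close> by (simp add: mult.commute)
qed

corollary esym_newton:
  assumes "finite A"
  shows "esym i f A * esym (i+2) f A \<le> (esym (i+1) f A)^2"
proof (cases "i + 2 \<le> card A")
  case False
  then show ?thesis using esym_eq_0_if_card_less[OF assms] by simp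
next
  case True
  define N where "N = card A"
  obtain h where h: "bij_betw h {..<N} A"
    unfolding N_def using ex_bij_betw_nat_finite[OF assms] by (auto simp: atLeast0LessThan)
  have e: "esym j f A = esym_avg (f \<circ> h) N j * real (N choose j)" if "j \<le> N" for j
    using esym_reindex[OF h, of j f] that unfolding esym_avg_def by simp
  let ?E = "esym_avg (f \<circ> h) N" and ?C = "\<lambda>j. real (N choose j)"
  have "esym i f A * esym (i+2) f A = (?E i * ?E (i+2)) * (?C i * ?C (i+2))"
    using True by (simp add: e N_def)
  also have "\<dots> \<le> (?E (i+1))^2 * (?C (i+1))^2"
  proof (rule mult_mono)
    show "?E i * ?E (i+2) \<le> (?E (i+1))^2"
      using True unfolding N_def by (rule esym_avg_newton)
    show "?C i * ?C (i+2) \<le> (?C (i+1))^2"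
      using True unfolding N_def by (rule binomial_log_concave)
  qed simp_all
  also have "\<dots> = (esym (i+1) f A)^2"
    using True by (simp add: e N_def power_mult_distrib)
  finally show ?thesis .
qed

section \<open>The cones Gamma_k\<close>

lemma in_Gamma_esym_pos: "finite A \<Longrightarrow> in_Gamma k f A \<Longrightarrow> l \<le> k \<Longrightarrow> esym l f A > 0"
  by (cases l) (auto simp: in_Gamma_def)

lemma newton_step_pos:
  fixes s0 s1 s2 x :: real
  assumes "s0 > 0" "s1 + x * s0 > 0" "s2 + x * s1 > 0" "s0 * s2 \<le> s1^2"
  shows "s1 > 0"
proof (rule ccontr)
  assume "\<not> s1 > 0"
  then have "s1^2 \<le> (- s1) * (x * s0)"
    using mult_left_mono[of "- s1" "x * s0" "- s1"] assms(2) by (simp add: power2_eq_square)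
  also have "\<dots> = s0 * (- (x * s1))" by (simp add: algebra_simps)
  also have "\<dots> < s0 * s2" using assms(1,3) by (intro mult_strict_left_mono) auto
  finally show False using assms(4) by simp
qed

lemma in_Gamma_remove:
  assumes fin: "finite A" and i: "i \<in> A"
  shows "in_Gamma k f A \<Longrightarrow> in_Gamma (k - 1) f (A - {i})"
proof (induction k)
  case (Suc k)
  have IH: "in_Gamma (k - 1) f (A - {i})" using Suc unfolding in_Gamma_def by auto
  show ?case
  proof (cases k)
    case (Suc k0)
    let ?s = "\<lambda>j. esym j f (A - {i})"
    have rec: "esym (Suc m) f A = ?s (Suc m) + f i * ?s m" for m
      using esym_remove[OF fin i] .
    have "?s (Suc k0) > 0"
    proof (rule newton_step_pos)
      show "?s k0 > 0" using in_Gamma_esym_pos[OF _ IH] fin Suc by simp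
      show "?s k0 * ?s (Suc (Suc k0)) \<le> (?s (Suc k0))^2"
        using esym_newton[of "A - {i}" k0 f] fin by simp
      have "esym (Suc k0) f A > 0" "esym (Suc (Suc k0)) f A > 0"
        using Suc.prems Suc unfolding in_Gamma_def by auto
      then show "?s (Suc k0) + f i * ?s k0 > 0" "?s (Suc (Suc k0)) + f i * ?s (Suc k0) > 0"
        using rec[of k0] rec[of "Suc k0"] by simp_all
    qed
    then show ?thesis using IH Suc unfolding in_Gamma_def by (auto simp: le_Suc_eq)
  qed (simp add: in_Gamma_def)
qed (simp add: in_Gamma_def)

text \<open>For a log-concave positive sequence the ratios s (Suc j) / s j decrease.\<close>
lemma log_concave_cross_le:
  fixes s :: "nat \<Rightarrow> real"
  assumes pos: "\<And>j. j \<le> K \<Longrightarrow> s j > 0"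
    and lc: "\<And>j. s j * s (Suc (Suc j)) \<le> (s (Suc j))^2"
    and l: "l < K"
  shows "s l * s (Suc K) \<le> s K * s (Suc l)"
proof (cases "s (Suc K) > 0")
  case False
  then have "s l * s (Suc K) \<le> 0" using pos[of l] l by (simp add: mult_nonneg_nonpos)
  moreover have "0 < s K * s (Suc l)" using pos[of K] pos[of "Suc l"] l by simp
  ultimately show ?thesis by linarith
next
  case True
  then have pos': "s j > 0" if "j \<le> Suc K" for j
    using pos[of j] that by (cases "j = Suc K") auto
  define r where "r j = s (Suc j) / s j" for j
  have dec: "r (Suc j) \<le> r j" if "j < K" for j
    using lc[of j] pos'[of j] pos'[of "Suc j"] pos'[of "Suc (Suc j)"] that
    unfolding r_def by (simp add: field_simps power2_eq_square)
  have "r (l + t) \<le> r l" if "l + t \<le> K" for t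
    using that
  proof (induction t)
    case (Suc t)
    then show ?case using dec[of "l + t"] by simp
  qed simp
  from this[of "K - l"] have "r K \<le> r l" using l by simp
  then show ?thesis using pos[of K] pos[of l] l unfolding r_def by (simp add: field_simps)
qed

lemma in_Gamma_increase:
  assumes fin: "finite A" and i: "i \<in> A" and G: "in_Gamma k f A" and d: "d \<ge> 0" and lk: "l < k"
  defines "g \<equiv> f(i := f i + d)"
  shows "in_Gamma k g A \<and> esym k f A / esym l f A \<le> esym k g A / esym l g A"
proof -
  let ?s = "\<lambda>j. esym j f (A - {i})"
  have "esym j g (A - {i}) = ?s j" for j unfolding g_def by (rule esym_cong) auto
  then have inc: "esym (Suc m) g A = esym (Suc m) f A + d * ?s m" for m
    using esym_remove[OF fin i, of m f] esym_remove[OF fin i, of m g] unfolding g_def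
    by (simp add: algebra_simps)
  have G': "in_Gamma (k - 1) f (A - {i})" by (rule in_Gamma_remove[OF fin i G])
  have spos: "?s m > 0" if "m \<le> k - 1" for m
    using in_Gamma_esym_pos[OF _ G' that] fin by simp
  have Gg: "in_Gamma k g A"
    unfolding in_Gamma_def
  proof
    fix j assume j: "j \<in> {1..k}"
    then obtain m where m: "j = Suc m" by (cases j) auto
    then have "m \<le> k - 1" using j by simp
    then have "d * ?s m \<ge> 0" using d spos[of m] by simp
    moreover have "esym j f A > 0" using G j unfolding in_Gamma_def by auto
    ultimately show "esym j g A > 0" using inc[of m] m by simp
  qed
  obtain k0 where k0: "k = Suc k0" using lk by (cases k) auto
  have cross: "esym k f A * esym l g A \<le> esym k g A * esym l f A"
  proof (cases l)
    case 0
    then show ?thesis using inc[of k0] spos[of k0] d fin k0 by simp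
  next
    case (Suc l0)
    have "?s l0 * ?s (Suc k0) \<le> ?s k0 * ?s (Suc l0)"
    proof (rule log_concave_cross_le)
      show "?s j > 0" if "j \<le> k0" for j using spos that k0 by simp
      show "?s j * ?s (Suc (Suc j)) \<le> (?s (Suc j))^2" for j
        using esym_newton[of "A - {i}" j f] fin by simp
    qed (use Suc lk k0 in simp)
    moreover have "esym k g A * esym l f A - esym k f A * esym l g A
        = d * (?s k0 * ?s (Suc l0) - ?s l0 * ?s (Suc k0))"
      using inc[of k0] inc[of l0] esym_remove[OF fin i, of k0 f] esym_remove[OF fin i, of l0 f]
      unfolding k0 Suc by (simp add: algebra_simps)
    ultimately show ?thesis
      using mult_nonneg_nonneg[OF d, of "?s k0 * ?s (Suc l0) - ?s l0 * ?s (Suc k0)"] by linarith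
  qed
  have "esym l f A > 0" "esym l g A > 0"
    using in_Gamma_esym_pos[OF fin G] in_Gamma_esym_pos[OF fin Gg] lk by auto
  with cross Gg show ?thesis by (simp add: field_simps)
qed

theorem in_Gamma_mono:
  assumes fin: "finite A" and G: "in_Gamma k f A" and lk: "l < k"
    and le: "\<And>i. i \<in> A \<Longrightarrow> f i \<le> g i"
  shows "in_Gamma k g A \<and> esym k f A / esym l f A \<le> esym k g A / esym l g A"
proof -
  define h where "h D = (\<lambda>i. if i \<in> D then g i else f i)" for D
  have main: "in_Gamma k (h D) A \<and> esym k f A / esym l f A \<le> esym k (h D) A / esym l (h D) A"
    if "D \<subseteq> A" for D
    using finite_subset[OF that fin] that
  proof (induction D rule: finite_subset_induct)
    case empty
    then show ?case using G by (simp add: h_def)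
  next
    case (insert a D)
    have "h (insert a D) = (h D)(a := h D a + (g a - f a))"
      using insert.hyps by (auto simp: h_def)
    moreover have "g a - f a \<ge> 0" using le[OF insert.hyps(2)] by simp
    ultimately have "in_Gamma k (h (insert a D)) A \<and>
        esym k (h D) A / esym l (h D) A \<le> esym k (h (insert a D)) A / esym l (h (insert a D)) A"
      using in_Gamma_increase[OF fin insert.hyps(2) insert.IH[THEN conjunct1], of "g a - f a" l] lk
      by simp
    then show ?case using insert.IH by linarith
  qed
  have "esym j (h A) A = esym j g A" for j by (rule esym_cong) (simp add: h_def)
  then show ?thesis using main[of A] unfolding in_Gamma_def by simp
qed

lemma bij_betw_fun_upd_insert:
  assumes "bij_betw f A B" "a \<notin> A" "b \<notin> B"
  shows "bij_betw (f(a := b)) (insert a A) (insert b B)"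
proof -
  have "bij_betw (f(a := b)) A B"
    using assms(1) by (rule bij_betw_cong[THEN iffD1, rotated]) (use assms(2) in auto)
  then show ?thesis using assms(2,3) unfolding bij_betw_def by (auto simp: inj_on_insert)
qed

lemma card_level_sets_remove_max:
  fixes lam :: "'a \<Rightarrow> real" and mu :: "'b \<Rightarrow> real"
  assumes "i0 \<in> I" "j0 \<in> J" and lam_le: "\<And>i. i \<in> I \<Longrightarrow> lam i \<le> lam i0" and "lam i0 \<le> mu j0"
    and cnt: "\<And>c. card {i\<in>I. c \<le> lam i} \<le> card {j\<in>J. c \<le> mu j}"
  shows "card {i\<in>I - {i0}. c \<le> lam i} \<le> card {j\<in>J - {j0}. c \<le> mu j}"
proof (cases "c \<le> lam i0")
  case True
  have eqI: "{i\<in>I - {i0}. c \<le> lam i} = {i\<in>I. c \<le> lam i} - {i0}"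
    and eqJ: "{j\<in>J - {j0}. c \<le> mu j} = {j\<in>J. c \<le> mu j} - {j0}" by auto
  have "card ({i\<in>I. c \<le> lam i} - {i0}) = card {i\<in>I. c \<le> lam i} - 1"
    using assms(1) True by (intro card_Diff_singleton) simp
  moreover have "card ({j\<in>J. c \<le> mu j} - {j0}) = card {j\<in>J. c \<le> mu j} - 1"
    using assms(2,4) True by (intro card_Diff_singleton) simp
  ultimately show ?thesis unfolding eqI eqJ using cnt[of c] by arith
next
  case False
  then have "{i\<in>I - {i0}. c \<le> lam i} = {}"
    using lam_le by force
  then show ?thesis by (metis card.empty zero_le)
qed

text \<open>Greedy matching: pair the largest lam with the largest mu and recurse.\<close>
lemma exists_bij_dominating:
  fixes lam :: "'a \<Rightarrow> real" and mu :: "'b \<Rightarrow> real"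
  assumes "finite I" "finite J" "card I = card J"
    and "\<And>c. card {i\<in>I. c \<le> lam i} \<le> card {j\<in>J. c \<le> mu j}"
  shows "\<exists>p. bij_betw p I J \<and> (\<forall>i\<in>I. lam i \<le> mu (p i))"
  using assms
proof (induction "card I" arbitrary: I J)
  case 0
  then show ?case by (auto simp: bij_betw_def)
next
  case (Suc n)
  then have "I \<noteq> {}" "J \<noteq> {}" by auto
  have "Max (lam ` I) \<in> lam ` I" "Max (mu ` J) \<in> mu ` J"
    using Suc.prems(1,2) \<open>I \<noteq> {}\<close> \<open>J \<noteq> {}\<close> by simp_all
  then obtain i0 j0 where i0: "i0 \<in> I" "lam i0 = Max (lam ` I)"
    and j0: "j0 \<in> J" "mu j0 = Max (mu ` J)"
    by (metis imageE)
  have lam_le: "lam i \<le> lam i0" if "i \<in> I" for i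
    using Max_ge[of "lam ` I" "lam i"] i0(2) Suc.prems(1) that by simp
  have "i0 \<in> {i\<in>I. lam i0 \<le> lam i}" using i0 by simp
  then have "card {i\<in>I. lam i0 \<le> lam i} \<noteq> 0" using Suc.prems(1) by auto
  then have "card {j\<in>J. lam i0 \<le> mu j} \<noteq> 0" using Suc.prems(4)[of "lam i0"] by linarith
  then have "{j\<in>J. lam i0 \<le> mu j} \<noteq> {}" by (metis card.empty)
  then obtain j1 where "j1 \<in> J" "lam i0 \<le> mu j1" by auto
  moreover have "mu j1 \<le> mu j0"
    using Max_ge[of "mu ` J" "mu j1"] j0(2) Suc.prems(2) \<open>j1 \<in> J\<close> by simp
  ultimately have "lam i0 \<le> mu j0" by linarith
  moreover have "n = card (I - {i0})" "card (I - {i0}) = card (J - {j0})"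
    using Suc.hyps(2) Suc.prems(3) i0(1) j0(1) by auto
  ultimately obtain p where p: "bij_betw p (I - {i0}) (J - {j0})" "\<forall>i\<in>I - {i0}. lam i \<le> mu (p i)"
    using Suc.hyps(1)[of "I - {i0}" "J - {j0}"] Suc.prems
      card_level_sets_remove_max[where lam = lam and mu = mu, OF i0(1) j0(1) lam_le] by blast
  have "bij_betw (p(i0 := j0)) I J"
    using bij_betw_fun_upd_insert[OF p(1), of i0 j0] i0(1) j0(1) by (simp add: insert_absorb)
  then show ?case using p(2) \<open>lam i0 \<le> mu j0\<close> by auto
qed

lemma finite_multi_indices: "finite (multi_indices n P)"
  unfolding multi_indices_def by (rule finite_subset[of _ "Pow {1..n}"]) auto

theorem in_Gamma_Lam_mono:
  fixes lam mu :: "nat \<Rightarrow> real"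
  assumes cnt: "\<And>c. card {i\<in>{1..n}. c \<le> lam i} \<le> card {j\<in>{1..n}. c \<le> mu j}"
    and G: "in_Gamma k (Lam lam) (multi_indices n P)" and lk: "l < k"
  shows "in_Gamma k (Lam mu) (multi_indices n P) \<and>
    esym k (Lam lam) (multi_indices n P) / esym l (Lam lam) (multi_indices n P)
      \<le> esym k (Lam mu) (multi_indices n P) / esym l (Lam mu) (multi_indices n P)"
proof -
  let ?M = "multi_indices n P"
  obtain p where p: "bij_betw p {1..n} {1..n}" "\<forall>i\<in>{1..n}. lam i \<le> mu (p i)"
    using exists_bij_dominating[of "{1..n}" "{1..n}" lam mu] cnt by auto
  have bijM: "bij_betw ((`) p) ?M ?M"
    unfolding multi_indices_def by (rule bij_betw_image_subsets_card[OF p(1)])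
  have "Lam lam S \<le> (Lam mu \<circ> (`) p) S" if "S \<in> ?M" for S
  proof -
    have S: "S \<subseteq> {1..n}" using that unfolding multi_indices_def by auto
    then have "(Lam mu \<circ> (`) p) S = (\<Sum>i\<in>S. mu (p i))"
      unfolding Lam_def using bij_betw_imp_inj_on[OF p(1)] by (simp add: sum.reindex inj_on_subset)
    then show ?thesis unfolding Lam_def using p(2) S by (auto intro!: sum_mono)
  qed
  moreover have "esym j (Lam mu) ?M = esym j (Lam mu \<circ> (`) p) ?M" for j
    by (rule esym_reindex[OF bijM])
  ultimately show ?thesis
    using in_Gamma_mono[OF finite_multi_indices G lk] unfolding in_Gamma_def by simp
qed

section \<open>Symmetric forms on the tangent space\<close>

lemma quadratic_nonpos_imp_linear_coeff_0:
  fixes a b :: real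
  assumes "\<And>s. a * s + b * s^2 \<le> 0"
  shows "a = 0"
proof -
  define t where "t = 1 / (\<bar>b\<bar> + 1)"
  have "t > 0" unfolding t_def by simp
  have "\<bar>b * t\<bar> < 1" unfolding t_def by (simp add: abs_mult field_simps)
  then have "1 + b * t > 0" by linarith
  have "a^2 * (t * (1 + b * t)) = a * (a * t) + b * (a * t)^2"
    by (simp add: power2_eq_square algebra_simps)
  also have "\<dots> \<le> 0" by (rule assms)
  finally show ?thesis
    using \<open>t > 0\<close> \<open>1 + b * t > 0\<close> by (simp add: mult_le_0_iff)
qed

lemma form_add_scaleR:
  fixes M :: "real^'n^'n"
  assumes sym: "\<And>v w. v \<bullet> (M *v w) = w \<bullet> (M *v v)"
  shows "(v + s *\<^sub>R z) \<bullet> (M *v (v + s *\<^sub>R z)) = v \<bullet> (M *v v) + 2 * s * (v \<bullet> (M *v z)) + s^2 * (z \<bullet> (M *v z))"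
  using sym[of z v]
  by (simp add: matrix_vector_right_distrib matrix_vector_mult_scaleR inner_add_left inner_add_right
      power2_eq_square algebra_simps)

text \<open>Moving a maximiser of the Rayleigh quotient along an orthogonal direction must not
  increase the quotient to first order.\<close>
lemma rayleigh_max_orthogonal:
  fixes M :: "real^'n^'n"
  assumes sym: "\<And>v w. v \<bullet> (M *v w) = w \<bullet> (M *v v)"
    and W: "subspace W" and w1: "w1 \<in> W" "norm w1 = 1"
    and max: "\<And>v. v \<in> W \<Longrightarrow> norm v = 1 \<Longrightarrow> v \<bullet> (M *v v) \<le> w1 \<bullet> (M *v w1)"
    and z: "z \<in> W" "z \<bullet> w1 = 0"
  shows "w1 \<bullet> (M *v z) = 0"
proof -
  define m where "m = w1 \<bullet> (M *v w1)"
  have scale: "(r *\<^sub>R u) \<bullet> (M *v (r *\<^sub>R u)) = r^2 * (u \<bullet> (M *v u))" for r u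
    by (simp add: matrix_vector_mult_scaleR power2_eq_square)
  have hom: "v \<bullet> (M *v v) \<le> m * (v \<bullet> v)" if "v \<in> W" "v \<noteq> 0" for v
  proof -
    have "(v /\<^sub>R norm v) \<bullet> (M *v (v /\<^sub>R norm v)) \<le> m"
      unfolding m_def using that W by (intro max) (auto simp: subspace_scale)
    then have "(norm v)^2 * ((v /\<^sub>R norm v) \<bullet> (M *v (v /\<^sub>R norm v))) \<le> (norm v)^2 * m"
      by (simp add: mult_left_mono)
    then show ?thesis
      using scale[of "norm v" "v /\<^sub>R norm v"] that by (simp add: power2_norm_eq_inner mult.commute)
  qed
  have "2 * (w1 \<bullet> (M *v z)) * s + (z \<bullet> (M *v z) - m * (z \<bullet> z)) * s^2 \<le> 0" for s
  proof -
    have vv: "(w1 + s *\<^sub>R z) \<bullet> (w1 + s *\<^sub>R z) = 1 + s^2 * (z \<bullet> z)"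
      using w1(2) z(2) by (simp add: inner_add_left inner_add_right inner_commute power2_eq_square
          norm_eq_1 algebra_simps)
    moreover have "0 \<le> s^2 * (z \<bullet> z)" by simp
    ultimately have "w1 + s *\<^sub>R z \<noteq> 0" by (metis inner_zero_left add_nonneg_eq_0_iff zero_le_one one_neq_zero)
    then have "(w1 + s *\<^sub>R z) \<bullet> (M *v (w1 + s *\<^sub>R z)) \<le> m * (1 + s^2 * (z \<bullet> z))"
      using hom[of "w1 + s *\<^sub>R z"] vv W w1(1) z(1) by (simp add: subspace_add subspace_scale)
    then show ?thesis unfolding form_add_scaleR[OF sym] m_def by (simp add: algebra_simps)
  qed
  then have "2 * (w1 \<bullet> (M *v z)) = 0" by (rule quadratic_nonpos_imp_linear_coeff_0)
  then show ?thesis by simp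
qed

lemma dim_orthogonal_in_subspace:
  fixes W :: "(real^'n) set"
  assumes W: "subspace W" and w1: "w1 \<in> W" "w1 \<bullet> w1 = 1"
  shows "dim {z \<in> W. z \<bullet> w1 = 0} + 1 = dim W"
proof -
  define W' where "W' = {z \<in> W. z \<bullet> w1 = 0}"
  have sW': "subspace W'" unfolding W'_def
    using W unfolding subspace_def by (auto simp: inner_add_left)
  have sums: "{a + b |a b. a \<in> W' \<and> b \<in> span {w1}} = W"
  proof (intro set_eqI iffI)
    fix v assume "v \<in> W"
    then have "v - (v \<bullet> w1) *\<^sub>R w1 \<in> W'" "v = (v - (v \<bullet> w1) *\<^sub>R w1) + (v \<bullet> w1) *\<^sub>R w1"
      unfolding W'_def using w1 W by (auto simp: subspace_diff subspace_scale inner_diff_left)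
    moreover have "(v \<bullet> w1) *\<^sub>R w1 \<in> span {w1}" by (simp add: span_base span_scale)
    ultimately show "v \<in> {a + b |a b. a \<in> W' \<and> b \<in> span {w1}}" by blast
  next
    fix v assume "v \<in> {a + b |a b. a \<in> W' \<and> b \<in> span {w1}}"
    then obtain a r where "v = a + r *\<^sub>R w1" "a \<in> W"
      unfolding W'_def span_singleton by blast
    then show "v \<in> W" using W w1(1) by (simp add: subspace_add subspace_scale)
  qed
  have "W' \<inter> span {w1} \<subseteq> {0}"
    using w1(2) by (auto simp: W'_def span_singleton)
  then have "dim (W' \<inter> span {w1}) = 0" by (simp add: dim_eq_0)
  moreover have "dim (span {w1}) = 1"
    using w1(2) by (subst dim_span_eq_card_independent) (auto simp: independent_insert)
  ultimately have "dim W' + 1 = dim W"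
    using dim_sums_Int[OF sW' subspace_span[of "{w1}"], unfolded sums] by linarith
  then show ?thesis unfolding W'_def .
qed

lemma exists_rayleigh_maximiser:
  fixes M :: "real^'n^'n"
  assumes "subspace W" "dim W \<noteq> 0"
  shows "\<exists>w1\<in>W \<inter> sphere 0 1. \<forall>v\<in>W \<inter> sphere 0 1. v \<bullet> (M *v v) \<le> w1 \<bullet> (M *v w1)"
proof (rule continuous_attains_sup)
  show "compact (W \<inter> sphere 0 1)"
    using closed_subspace[OF assms(1)] by (simp add: closed_Int_compact)
  obtain w where "w \<in> W" "w \<noteq> 0"
    using assms(2) dim_eq_0[of W] by auto
  then have "w /\<^sub>R norm w \<in> W \<inter> sphere 0 1" using assms(1) by (simp add: subspace_scale)
  then show "W \<inter> sphere 0 1 \<noteq> {}" by blast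
  show "continuous_on (W \<inter> sphere 0 1) (\<lambda>v. v \<bullet> (M *v v))"
    by (intro continuous_intros)
qed

text \<open>Spectral theorem for a symmetric matrix on a subspace, by successive maximisation of
  the Rayleigh quotient.\<close>
lemma exists_eigenframe_subspace:
  fixes M :: "real^'n^'n"
  assumes sym: "\<And>v w. v \<bullet> (M *v w) = w \<bullet> (M *v v)"
  shows "subspace W \<Longrightarrow> dim W = d \<Longrightarrow> \<exists>e. (\<forall>i\<in>{1..d}. e i \<in> W) \<and>
     (\<forall>i\<in>{1..d}. \<forall>j\<in>{1..d}. e i \<bullet> e j = (if i = j then 1 else 0)) \<and>
     (\<forall>i\<in>{1..d}. \<forall>j\<in>{1..d}. i \<noteq> j \<longrightarrow> e i \<bullet> (M *v e j) = 0)"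
proof (induction d arbitrary: W)
  case (Suc d)
  obtain w1 where w1: "w1 \<in> W \<inter> sphere 0 1"
    and max: "\<And>v. v \<in> W \<inter> sphere 0 1 \<Longrightarrow> v \<bullet> (M *v v) \<le> w1 \<bullet> (M *v w1)"
    using exists_rayleigh_maximiser[OF Suc.prems(1)] Suc.prems(2) by force
  then have w1W: "w1 \<in> W" "norm w1 = 1" "w1 \<bullet> w1 = 1" by (auto simp: norm_eq_1)
  define W' where "W' = {z \<in> W. z \<bullet> w1 = 0}"
  have "subspace W'" unfolding W'_def
    using Suc.prems(1) unfolding subspace_def by (auto simp: inner_add_left)
  moreover have "dim W' = d"
    using dim_orthogonal_in_subspace[OF Suc.prems(1) w1W(1,3)] Suc.prems(2) unfolding W'_def by simp
  ultimately obtain e' where e'W: "\<forall>i\<in>{1..d}. e' i \<in> W'"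
    and e'o: "\<forall>i\<in>{1..d}. \<forall>j\<in>{1..d}. e' i \<bullet> e' j = (if i = j then 1 else 0)"
    and e'M: "\<forall>i\<in>{1..d}. \<forall>j\<in>{1..d}. i \<noteq> j \<longrightarrow> e' i \<bullet> (M *v e' j) = 0"
    using Suc.IH by blast
  have orth: "e' i \<bullet> w1 = 0" "w1 \<bullet> e' i = 0" "w1 \<bullet> (M *v e' i) = 0" "e' i \<bullet> (M *v w1) = 0"
    if "i \<in> {1..d}" for i
  proof -
    show "e' i \<bullet> w1 = 0" "w1 \<bullet> e' i = 0" using e'W that unfolding W'_def by (auto simp: inner_commute)
    have "e' i \<in> W" "e' i \<bullet> w1 = 0" using e'W that unfolding W'_def by auto
    then show "w1 \<bullet> (M *v e' i) = 0"
      using rayleigh_max_orthogonal[OF sym Suc.prems(1) w1W(1,2)] max by simp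
    then show "e' i \<bullet> (M *v w1) = 0" using sym[of "e' i" w1] by simp
  qed
  define e where "e = e'(Suc d := w1)"
  have e: "e (Suc d) = w1" "\<And>i. i \<in> {1..d} \<Longrightarrow> e i = e' i" unfolding e_def by auto
  have ins: "{1..Suc d} = insert (Suc d) {1..d}" by auto
  have "\<forall>i\<in>{1..Suc d}. e i \<in> W"
    using e'W w1W(1) unfolding ins W'_def by (simp add: e)
  moreover have "\<forall>i\<in>{1..Suc d}. \<forall>j\<in>{1..Suc d}. e i \<bullet> e j = (if i = j then 1 else 0)"
    using e'o orth w1W(3) unfolding ins by (auto simp: e)
  moreover have "\<forall>i\<in>{1..Suc d}. \<forall>j\<in>{1..Suc d}. i \<noteq> j \<longrightarrow> e i \<bullet> (M *v e j) = 0"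
    using e'M orth unfolding ins by (auto simp: e)
  ultimately show ?case by blast
qed simp

lemma exists_tangent_eigenframe:
  fixes x :: "real^'m" and M :: "real^'m^'m"
  assumes x: "norm x = 1" and sym: "\<And>v w. v \<bullet> (M *v w) = w \<bullet> (M *v v)"
  obtains lam e where "tangent_frame x e"
    "\<forall>i\<in>{1..CARD('m) - 1}. \<forall>j\<in>{1..CARD('m) - 1}. e i \<bullet> (M *v e j) = (if i = j then lam i else 0)"
proof -
  have "x \<noteq> 0" using x by auto
  then have dimT: "dim {z. x \<bullet> z = 0} = CARD('m) - 1"
    using dim_hyperplane[of x] by (simp add: DIM_cart)
  obtain e where e: "\<forall>i\<in>{1..CARD('m) - 1}. e i \<in> {z. x \<bullet> z = 0}"
    and eo: "\<forall>i\<in>{1..CARD('m) - 1}. \<forall>j\<in>{1..CARD('m) - 1}. e i \<bullet> e j = (if i = j then 1 else 0)"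
    and eM: "\<forall>i\<in>{1..CARD('m) - 1}. \<forall>j\<in>{1..CARD('m) - 1}. i \<noteq> j \<longrightarrow> e i \<bullet> (M *v e j) = 0"
    using exists_eigenframe_subspace[OF sym subspace_hyperplane dimT] by blast
  have "tangent_frame x e" unfolding tangent_frame_def using e eo by (simp add: inner_commute)
  moreover have "\<forall>i\<in>{1..CARD('m) - 1}. \<forall>j\<in>{1..CARD('m) - 1}.
      e i \<bullet> (M *v e j) = (if i = j then e i \<bullet> (M *v e i) else 0)"
    using eM by auto
  ultimately show ?thesis by (rule that)
qed

lemma orthonormal_frame_independent:
  fixes e :: "'i \<Rightarrow> real^'m"
  assumes "\<forall>i\<in>K. \<forall>j\<in>K. e i \<bullet> e j = (if i = j then 1 else 0)"
  shows "inj_on e K" and "independent (e ` K)"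
proof -
  show "inj_on e K"
    using assms by (intro inj_onI) (metis one_neq_zero)
  show "independent (e ` K)"
    using assms by (intro pairwise_orthogonal_independent)
      (auto simp: pairwise_def orthogonal_def, metis inner_zero_left zero_neq_one)
qed

lemma form_sum_eigenframe:
  fixes M :: "real^'n^'n"
  assumes fin: "finite K"
    and diag: "\<forall>i\<in>K. \<forall>j\<in>K. e i \<bullet> (M *v e j) = (if i = j then lam i else 0)"
  shows "(\<Sum>i\<in>K. a i *\<^sub>R e i) \<bullet> (M *v (\<Sum>j\<in>K. a j *\<^sub>R e j)) = (\<Sum>i\<in>K. (a i)^2 * lam i)"
proof -
  have col: "e i \<bullet> (M *v (\<Sum>j\<in>K. a j *\<^sub>R e j)) = a i * lam i" if i: "i \<in> K" for i
  proof -
    have "e i \<bullet> (M *v (\<Sum>j\<in>K. a j *\<^sub>R e j)) = (\<Sum>j\<in>K. a j * (e i \<bullet> (M *v e j)))"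
      by (simp add: vec.sum matrix_vector_mult_scaleR inner_sum_right)
    also have "\<dots> = (\<Sum>j\<in>K. if j = i then a i * lam i else 0)"
      using diag i by (intro sum.cong) auto
    finally show ?thesis using fin i by simp
  qed
  have "(\<Sum>i\<in>K. a i *\<^sub>R e i) \<bullet> (M *v (\<Sum>j\<in>K. a j *\<^sub>R e j))
      = (\<Sum>i\<in>K. a i * (e i \<bullet> (M *v (\<Sum>j\<in>K. a j *\<^sub>R e j))))"
    by (simp add: inner_sum_left)
  also have "\<dots> = (\<Sum>i\<in>K. (a i)^2 * lam i)"
    using col by (simp add: power2_eq_square mult.assoc)
  finally show ?thesis .
qed

lemma form_on_eigenframe_span:
  fixes M :: "real^'n^'n"
  assumes fin: "finite K"
    and o: "\<forall>i\<in>K. \<forall>j\<in>K. e i \<bullet> e j = (if i = j then 1 else 0)"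
    and diag: "\<forall>i\<in>K. \<forall>j\<in>K. e i \<bullet> (M *v e j) = (if i = j then lam i else 0)"
    and w: "w \<in> span (e ` K)"
  obtains a where "w \<bullet> (M *v w) = (\<Sum>i\<in>K. (a i)^2 * lam i)" "w \<bullet> w = (\<Sum>i\<in>K. (a i)^2)"
proof -
  obtain u where "w = (\<Sum>v\<in>e ` K. u v *\<^sub>R v)"
    using w span_finite[of "e ` K"] fin by auto
  also have "\<dots> = (\<Sum>i\<in>K. u (e i) *\<^sub>R e i)"
    using orthonormal_frame_independent(1)[OF o] by (simp add: sum.reindex)
  finally have w: "w = (\<Sum>i\<in>K. u (e i) *\<^sub>R e i)" .
  have "w \<bullet> (mat 1 *v w) = (\<Sum>i\<in>K. (u (e i))^2 * 1)"
    unfolding w using o by (intro form_sum_eigenframe[OF fin]) simp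
  then show ?thesis
    using that[of "u \<circ> e"] form_sum_eigenframe[OF fin diag, of "u \<circ> e"] unfolding w by simp
qed

lemma exists_nonzero_in_Int:
  fixes S T U :: "(real^'n) set"
  assumes "subspace S" "subspace T" "subspace U" "S \<subseteq> U" "T \<subseteq> U" "dim U < dim S + dim T"
  obtains w where "w \<in> S" "w \<in> T" "w \<noteq> 0"
proof -
  have "{a + b |a b. a \<in> S \<and> b \<in> T} \<subseteq> U" using assms(3-5) by (blast intro: subspace_add)
  then have "dim {a + b |a b. a \<in> S \<and> b \<in> T} \<le> dim U" by (rule dim_subset)
  then have "dim (S \<inter> T) \<noteq> 0" using dim_sums_Int[OF assms(1,2)] assms(6) by linarith
  then show ?thesis using that dim_eq_0[of "S \<inter> T"] by auto
qed

lemma form_ge_on_eigenframe_span: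
  fixes M :: "real^'n^'n"
  assumes "finite K"
    and "\<forall>i\<in>K. \<forall>j\<in>K. e i \<bullet> e j = (if i = j then 1 else 0)"
    and "\<forall>i\<in>K. \<forall>j\<in>K. e i \<bullet> (M *v e j) = (if i = j then lam i else 0)"
    and "\<And>i. i \<in> K \<Longrightarrow> c \<le> lam i" and "w \<in> span (e ` K)"
  shows "c * (w \<bullet> w) \<le> w \<bullet> (M *v w)"
proof -
  obtain a where Mw: "w \<bullet> (M *v w) = (\<Sum>i\<in>K. (a i)^2 * lam i)" and ww: "w \<bullet> w = (\<Sum>i\<in>K. (a i)^2)"
    using form_on_eigenframe_span[OF assms(1,2,3,5)] by blast
  have "c * (w \<bullet> w) = (\<Sum>i\<in>K. (a i)^2 * c)" unfolding ww by (simp add: sum_distrib_left mult.commute)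
  also have "\<dots> \<le> w \<bullet> (M *v w)" unfolding Mw by (rule sum_mono, rule mult_left_mono) (auto simp: assms(4))
  finally show ?thesis .
qed

lemma form_less_on_eigenframe_span:
  fixes M :: "real^'n^'n"
  assumes "finite K"
    and "\<forall>i\<in>K. \<forall>j\<in>K. e i \<bullet> e j = (if i = j then 1 else 0)"
    and "\<forall>i\<in>K. \<forall>j\<in>K. e i \<bullet> (M *v e j) = (if i = j then lam i else 0)"
    and less: "\<And>i. i \<in> K \<Longrightarrow> lam i < c" and "w \<in> span (e ` K)" and "w \<noteq> 0"
  shows "w \<bullet> (M *v w) < c * (w \<bullet> w)"
proof -
  obtain a where Mw: "w \<bullet> (M *v w) = (\<Sum>i\<in>K. (a i)^2 * lam i)" and ww: "w \<bullet> w = (\<Sum>i\<in>K. (a i)^2)"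
    using form_on_eigenframe_span[OF assms(1,2,3,5)] by blast
  have "\<exists>i\<in>K. a i \<noteq> 0"
  proof (rule ccontr)
    assume "\<not> (\<exists>i\<in>K. a i \<noteq> 0)"
    then have "w \<bullet> w = 0" unfolding ww by simp
    then show False using \<open>w \<noteq> 0\<close> by simp
  qed
  then obtain i0 where "i0 \<in> K" "a i0 \<noteq> 0" by blast
  have "(\<Sum>i\<in>K. (a i)^2 * lam i) < (\<Sum>i\<in>K. (a i)^2 * c)"
  proof (rule sum_strict_mono_ex1[OF assms(1)])
    show "\<forall>i\<in>K. (a i)^2 * lam i \<le> (a i)^2 * c"
      using less by (simp add: mult_left_mono less_imp_le)
    show "\<exists>i\<in>K. (a i)^2 * lam i < (a i)^2 * c"
    proof
      show "(a i0)^2 * lam i0 < (a i0)^2 * c"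
        using \<open>i0 \<in> K\<close> \<open>a i0 \<noteq> 0\<close> less[of i0] by simp
    qed (rule \<open>i0 \<in> K\<close>)
  qed
  also have "\<dots> = c * (w \<bullet> w)" unfolding ww by (simp add: sum_distrib_left mult.commute)
  finally show ?thesis unfolding Mw .
qed

lemma tangent_frame_orthonormal:
  "tangent_frame x e \<Longrightarrow> I \<subseteq> {1..CARD('m) - 1} \<Longrightarrow>
    \<forall>i\<in>I. \<forall>j\<in>I. e i \<bullet> e j = (if i = j then 1 else (0::real))"
  for x :: "real^'m"
  unfolding tangent_frame_def by blast

lemma tangent_frame_spans_meet:
  fixes x :: "real^'m" and e f :: "nat \<Rightarrow> real^'m"
  assumes te: "tangent_frame x e" and tf: "tangent_frame x f" and x: "norm x = 1"
    and I: "I \<subseteq> {1..CARD('m) - 1}" and J: "J \<subseteq> {1..CARD('m) - 1}"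
    and card: "CARD('m) - 1 < card I + card J"
  obtains w where "w \<in> span (e ` I)" "w \<in> span (f ` J)" "w \<noteq> 0" "w \<bullet> x = 0"
proof -
  let ?T = "{z. x \<bullet> z = 0}"
  have eo: "\<forall>i\<in>I. \<forall>j\<in>I. e i \<bullet> e j = (if i = j then 1 else 0)"
    and fo: "\<forall>i\<in>J. \<forall>j\<in>J. f i \<bullet> f j = (if i = j then 1 else 0)"
    using tangent_frame_orthonormal[OF te I] tangent_frame_orthonormal[OF tf J] .
  have "e ` I \<subseteq> ?T" "f ` J \<subseteq> ?T"
    using te tf I J unfolding tangent_frame_def by (auto simp: inner_commute)
  then have spanT: "span (e ` I) \<subseteq> ?T" "span (f ` J) \<subseteq> ?T"
    by (simp_all add: span_minimal subspace_hyperplane)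
  have "x \<noteq> 0" using x by auto
  then have "dim ?T = CARD('m) - 1" using dim_hyperplane[of x] by (simp add: DIM_cart)
  moreover have "dim (span (e ` I)) = card I" "dim (span (f ` J)) = card J"
    using dim_span_eq_card_independent[OF orthonormal_frame_independent(2)[OF eo]]
      dim_span_eq_card_independent[OF orthonormal_frame_independent(2)[OF fo]]
      card_image[OF orthonormal_frame_independent(1)[OF eo]]
      card_image[OF orthonormal_frame_independent(1)[OF fo]] by simp_all
  ultimately have "dim ?T < dim (span (e ` I)) + dim (span (f ` J))" using card by simp
  then obtain w where "w \<in> span (e ` I)" "w \<in> span (f ` J)" "w \<noteq> 0"
    by (rule exists_nonzero_in_Int[OF subspace_span subspace_span subspace_hyperplane spanT])
  moreover have "w \<bullet> x = 0" using spanT(2) calculation(2) by (auto simp: inner_commute)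
  ultimately show ?thesis by (rule that)
qed

text \<open>Courant-Fischer in counting form: otherwise the span of the eigenvectors of A with
  eigenvalue at least c and that of the eigenvectors of B with eigenvalue below c would meet in a
  nonzero tangent vector w, giving c |w|^2 \<le> w \<bullet> A w \<le> w \<bullet> B w < c |w|^2.\<close>
theorem card_eigenvalues_ge_mono:
  fixes x :: "real^'m" and e f :: "nat \<Rightarrow> real^'m" and A B :: "real^'m^'m"
  assumes te: "tangent_frame x e" and tf: "tangent_frame x f"
    and dA: "\<forall>i\<in>{1..CARD('m) - 1}. \<forall>j\<in>{1..CARD('m) - 1}. e i \<bullet> (A *v e j) = (if i = j then lam i else 0)"
    and dB: "\<forall>i\<in>{1..CARD('m) - 1}. \<forall>j\<in>{1..CARD('m) - 1}. f i \<bullet> (B *v f j) = (if i = j then mu i else 0)"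
    and x: "norm x = 1" and le: "\<And>w. w \<bullet> x = 0 \<Longrightarrow> w \<bullet> (A *v w) \<le> w \<bullet> (B *v w)"
  shows "card {i\<in>{1..CARD('m) - 1}. c \<le> lam i} \<le> card {j\<in>{1..CARD('m) - 1}. c \<le> mu j}"
proof (rule ccontr)
  define n where "n = CARD('m) - 1"
  define I where "I = {i\<in>{1..n}. c \<le> lam i}"
  define J where "J = {j\<in>{1..n}. mu j < c}"
  have IJ: "I \<subseteq> {1..n}" "J \<subseteq> {1..n}" "finite I" "finite J" unfolding I_def J_def by auto
  define Bc where "Bc = card {j\<in>{1..n}. c \<le> mu j}"
  assume "\<not> ?thesis"
  then have "Bc < card I" unfolding Bc_def I_def n_def by simp
  moreover have "card J + Bc = n"
  proof -
    have "J = {1..n} - {j\<in>{1..n}. c \<le> mu j}" unfolding J_def by auto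
    then have "card J = card {1..n} - Bc"
      unfolding Bc_def by (simp only:) (rule card_Diff_subset, auto)
    moreover have "Bc \<le> card {1..n}" unfolding Bc_def by (rule card_mono) auto
    ultimately show ?thesis by simp
  qed
  ultimately have "n < card I + card J" by linarith
  then obtain w where wI: "w \<in> span (e ` I)" and wJ: "w \<in> span (f ` J)" and "w \<noteq> 0" "w \<bullet> x = 0"
    using tangent_frame_spans_meet[OF te tf x] IJ(1,2) unfolding n_def by metis
  have "c * (w \<bullet> w) \<le> w \<bullet> (A *v w)"
    using form_ge_on_eigenframe_span[OF IJ(3) tangent_frame_orthonormal[OF te] _ _ wI] dA IJ(1)
    unfolding I_def n_def by blast
  also have "\<dots> \<le> w \<bullet> (B *v w)" by (rule le[OF \<open>w \<bullet> x = 0\<close>])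
  also have "\<dots> < c * (w \<bullet> w)"
    using form_less_on_eigenframe_span[OF IJ(4) tangent_frame_orthonormal[OF tf] _ _ wJ \<open>w \<noteq> 0\<close>] dB IJ(2)
    unfolding J_def n_def by blast
  finally show False by simp
qed

section \<open>Second derivatives\<close>

lemma linear_eq_sum_axis:
  fixes L :: "real^'m \<Rightarrow> 'b::real_vector"
  assumes "linear L"
  shows "L h = (\<Sum>i\<in>UNIV. h $ i *\<^sub>R L (axis i 1))"
proof -
  have "L h = L (\<Sum>i\<in>UNIV. h $ i *\<^sub>R axis i 1)"
    using basis_expansion[of h] by (simp add: scalar_mult_eq_scaleR)
  also have "\<dots> = (\<Sum>i\<in>UNIV. h $ i *\<^sub>R L (axis i 1))"
    by (simp add: linear_sum[OF assms] linear_scale[OF assms])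
  finally show ?thesis .
qed

lemma has_derivative_sph_ext:
  assumes "sph_ext u differentiable (at y)"
  shows "(sph_ext u has_derivative (\<lambda>h. ext_grad u y \<bullet> h)) (at y)"
proof -
  let ?L = "frechet_derivative (sph_ext u) (at y)"
  have "?L h = ext_grad u y \<bullet> h" for h
    using linear_eq_sum_axis[OF linear_frechet_derivative[OF assms], of h]
    unfolding ext_grad_def inner_vec_def by (simp add: mult.commute)
  then have "?L = (\<lambda>h. ext_grad u y \<bullet> h)" by (rule ext)
  then show ?thesis using frechet_derivative_works[THEN iffD1, OF assms] by simp
qed

lemma has_derivative_ext_grad:
  assumes "ext_grad u differentiable (at y)"
  shows "(ext_grad u has_derivative (\<lambda>h. ext_hess u y *v h)) (at y)"
proof -
  let ?L = "frechet_derivative (ext_grad u) (at y)"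
  have "?L h = ext_hess u y *v h" for h
    using linear_eq_sum_axis[OF linear_frechet_derivative[OF assms], of h]
    unfolding ext_hess_def matrix_vector_mult_def by (simp add: vec_eq_iff sum_component mult.commute)
  then have "?L = (\<lambda>h. ext_hess u y *v h)" by (rule ext)
  then show ?thesis using frechet_derivative_works[THEN iffD1, OF assms] by simp
qed

lemma has_real_derivative_on_line:
  fixes U :: "real^'m \<Rightarrow> real"
  assumes "(U has_derivative (\<lambda>h. G \<bullet> h)) (at (p + t *\<^sub>R w))"
  shows "((\<lambda>s. U (p + s *\<^sub>R w)) has_real_derivative (G \<bullet> w)) (at t)"
proof -
  have "((\<lambda>s. p + s *\<^sub>R w) has_derivative (\<lambda>s. s *\<^sub>R w)) (at t)"
    by (intro derivative_eq_intros) auto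
  from diff_chain_at[OF this assms]
  have "((\<lambda>s. U (p + s *\<^sub>R w)) has_derivative (\<lambda>s. s * (G \<bullet> w))) (at t)"
    by (simp add: comp_def)
  then show ?thesis by (simp add: has_field_derivative_def mult_commute_abs)
qed

lemma second_difference_mean_value:
  fixes U :: "real^'m \<Rightarrow> real" and G :: "real^'m \<Rightarrow> real^'m"
  assumes dU: "\<And>y. y \<in> S \<Longrightarrow> (U has_derivative (\<lambda>h. G y \<bullet> h)) (at y)"
    and inS: "\<And>t. \<bar>t\<bar> \<le> \<bar>s\<bar> \<Longrightarrow> a + s *\<^sub>R v + t *\<^sub>R w \<in> S \<and> a + t *\<^sub>R w \<in> S"
  obtains \<xi> where "\<bar>\<xi>\<bar> \<le> \<bar>s\<bar>"
    "U (a + s *\<^sub>R v + s *\<^sub>R w) - U (a + s *\<^sub>R v) - U (a + s *\<^sub>R w) + U a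
      = s * ((G (a + s *\<^sub>R v + \<xi> *\<^sub>R w) - G (a + \<xi> *\<^sub>R w)) \<bullet> w)"
proof -
  define \<phi> where "\<phi> t = U (a + s *\<^sub>R v + t *\<^sub>R w) - U (a + t *\<^sub>R w)" for t
  define \<phi>' where "\<phi>' t = (G (a + s *\<^sub>R v + t *\<^sub>R w) - G (a + t *\<^sub>R w)) \<bullet> w" for t
  have d\<phi>: "(\<phi> has_real_derivative \<phi>' t) (at t)" if "\<bar>t\<bar> \<le> \<bar>s\<bar>" for t
  proof -
    have "((\<lambda>t. U ((a + s *\<^sub>R v) + t *\<^sub>R w)) has_real_derivative G (a + s *\<^sub>R v + t *\<^sub>R w) \<bullet> w) (at t)"
      using dU inS[OF that] by (intro has_real_derivative_on_line) simp
    moreover have "((\<lambda>t. U (a + t *\<^sub>R w)) has_real_derivative G (a + t *\<^sub>R w) \<bullet> w) (at t)"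
      using dU inS[OF that] by (intro has_real_derivative_on_line) simp
    ultimately show ?thesis unfolding \<phi>_def \<phi>'_def inner_diff_left by (rule DERIV_diff)
  qed
  have "\<exists>\<xi>. \<bar>\<xi>\<bar> \<le> \<bar>s\<bar> \<and> \<phi> s - \<phi> 0 = s * \<phi>' \<xi>"
  proof (cases "0 < s")
    case True
    have "(\<phi> has_real_derivative \<phi>' x) (at x)" if "0 \<le> x" "x \<le> s" for x
      using d\<phi> that by simp
    then obtain z where "0 < z" "z < s" "\<phi> s - \<phi> 0 = (s - 0) * \<phi>' z"
      using MVT2[OF True] by blast
    then show ?thesis by (intro exI[of _ z]) auto
  next
    case False
    show ?thesis
    proof (cases "s = 0")
      case False
      with \<open>\<not> 0 < s\<close> have "s < 0" by simp
      have "(\<phi> has_real_derivative \<phi>' x) (at x)" if "s \<le> x" "x \<le> 0" for x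
        using d\<phi> that by simp
      then obtain z where "s < z" "z < 0" "\<phi> 0 - \<phi> s = (0 - s) * \<phi>' z"
        using MVT2[OF \<open>s < 0\<close>] by blast
      then show ?thesis by (intro exI[of _ z]) (auto simp: algebra_simps)
    qed simp
  qed
  then show ?thesis using that unfolding \<phi>_def \<phi>'_def by (auto simp: algebra_simps)
qed

lemma norm_scaleR_add_le:
  fixes v w :: "'a::real_normed_vector"
  assumes "\<bar>t\<bar> \<le> \<bar>s\<bar>"
  shows "norm (s *\<^sub>R v + t *\<^sub>R w) \<le> \<bar>s\<bar> * (norm v + norm w)"
proof -
  have "norm (s *\<^sub>R v + t *\<^sub>R w) \<le> \<bar>s\<bar> * norm v + \<bar>t\<bar> * norm w"
    using norm_triangle_ineq[of "s *\<^sub>R v" "t *\<^sub>R w"] by simp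
  also have "\<dots> \<le> \<bar>s\<bar> * norm v + \<bar>s\<bar> * norm w" using assms by (simp add: mult_right_mono)
  finally show ?thesis by (simp add: distrib_left)
qed

lemma second_difference_quotient_error:
  fixes U :: "real^'m \<Rightarrow> real" and G :: "real^'m \<Rightarrow> real^'m" and H :: "real^'m^'m"
  assumes dU: "\<And>y. y \<in> S \<Longrightarrow> (U has_derivative (\<lambda>h. G y \<bullet> h)) (at y)"
    and inS: "\<And>t. \<bar>t\<bar> \<le> \<bar>s\<bar> \<Longrightarrow> a + s *\<^sub>R v + t *\<^sub>R w \<in> S \<and> a + t *\<^sub>R w \<in> S"
    and rem: "\<And>y. norm (y - a) \<le> \<bar>s\<bar> * (norm v + norm w) \<Longrightarrow>
      norm (G y - G a - H *v (y - a)) \<le> \<epsilon> * norm (y - a)"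
    and "\<epsilon> \<ge> 0" "s \<noteq> 0"
  shows "\<bar>(U (a + s *\<^sub>R v + s *\<^sub>R w) - U (a + s *\<^sub>R v) - U (a + s *\<^sub>R w) + U a) / s^2 - w \<bullet> (H *v v)\<bar>
    \<le> \<epsilon> * ((norm v + 2 * norm w) * norm w)"
proof -
  obtain \<xi> where \<xi>: "\<bar>\<xi>\<bar> \<le> \<bar>s\<bar>" and mv:
    "U (a + s *\<^sub>R v + s *\<^sub>R w) - U (a + s *\<^sub>R v) - U (a + s *\<^sub>R w) + U a
      = s * ((G (a + s *\<^sub>R v + \<xi> *\<^sub>R w) - G (a + \<xi> *\<^sub>R w)) \<bullet> w)"
    by (rule second_difference_mean_value[OF dU inS])
  define R1 where "R1 = G (a + s *\<^sub>R v + \<xi> *\<^sub>R w) - G a - H *v (s *\<^sub>R v + \<xi> *\<^sub>R w)"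
  define R2 where "R2 = G (a + \<xi> *\<^sub>R w) - G a - H *v (\<xi> *\<^sub>R w)"
  have "norm (\<xi> *\<^sub>R w) \<le> \<bar>s\<bar> * norm w" using \<xi> by (simp add: mult_right_mono)
  also have "\<dots> \<le> \<bar>s\<bar> * (norm v + norm w)" by (simp add: mult_left_mono)
  finally have near: "norm (\<xi> *\<^sub>R w) \<le> \<bar>s\<bar> * (norm v + norm w)" .
  have "norm R1 \<le> \<epsilon> * norm (s *\<^sub>R v + \<xi> *\<^sub>R w)"
    using rem[of "a + s *\<^sub>R v + \<xi> *\<^sub>R w"] norm_scaleR_add_le[OF \<xi>, of v w]
    unfolding R1_def by (simp add: add.assoc)
  also have "\<dots> \<le> \<epsilon> * (\<bar>s\<bar> * (norm v + norm w))"
    using norm_scaleR_add_le[OF \<xi>, of v w] \<open>\<epsilon> \<ge> 0\<close> by (simp add: mult_left_mono)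
  finally have R1: "norm R1 \<le> \<epsilon> * (\<bar>s\<bar> * (norm v + norm w))" .
  have "norm R2 \<le> \<epsilon> * norm (\<xi> *\<^sub>R w)"
    using rem[of "a + \<xi> *\<^sub>R w"] near unfolding R2_def by simp
  also have "\<dots> \<le> \<epsilon> * (\<bar>s\<bar> * norm w)"
    using \<xi> \<open>\<epsilon> \<ge> 0\<close> by (simp add: mult_left_mono mult_right_mono)
  finally have R2: "norm R2 \<le> \<epsilon> * (\<bar>s\<bar> * norm w)" .
  have "G (a + s *\<^sub>R v + \<xi> *\<^sub>R w) - G (a + \<xi> *\<^sub>R w) = s *\<^sub>R (H *v v) + (R1 - R2)"
    unfolding R1_def R2_def by (simp add: matrix_vector_right_distrib matrix_vector_mult_scaleR)
  then have "(G (a + s *\<^sub>R v + \<xi> *\<^sub>R w) - G (a + \<xi> *\<^sub>R w)) \<bullet> w = s * (w \<bullet> (H *v v)) + (R1 - R2) \<bullet> w"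
    by (simp add: inner_add_left inner_commute[of "H *v v"])
  then have "(U (a + s *\<^sub>R v + s *\<^sub>R w) - U (a + s *\<^sub>R v) - U (a + s *\<^sub>R w) + U a) / s^2
      - w \<bullet> (H *v v) = ((R1 - R2) \<bullet> w) / s"
    unfolding mv using \<open>s \<noteq> 0\<close> by (simp add: power2_eq_square field_simps)
  also have "\<bar>\<dots>\<bar> \<le> (norm R1 + norm R2) * norm w / \<bar>s\<bar>"
  proof -
    have "\<bar>(R1 - R2) \<bullet> w\<bar> \<le> norm (R1 - R2) * norm w" by (rule Cauchy_Schwarz_ineq2)
    also have "\<dots> \<le> (norm R1 + norm R2) * norm w"
      by (intro mult_right_mono norm_triangle_ineq4) simp
    finally show ?thesis by (simp add: divide_right_mono)
  qed
  also have "\<dots> \<le> (\<epsilon> * (\<bar>s\<bar> * (norm v + norm w)) + \<epsilon> * (\<bar>s\<bar> * norm w)) * norm w / \<bar>s\<bar>"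
    using R1 R2 by (intro divide_right_mono mult_right_mono add_mono) auto
  also have "\<dots> = \<epsilon> * ((norm v + 2 * norm w) * norm w)"
    using \<open>s \<noteq> 0\<close> by (simp add: field_simps)
  finally show ?thesis .
qed

text \<open>Peano's form of Schwarz's theorem: only differentiability of the gradient at a is used.
  By the mean value theorem the second difference quotient differs from w \<bullet> H v by the
  first-order remainders of G at two points at distance O(s) from a.\<close>
lemma second_difference_limit:
  fixes U :: "real^'m \<Rightarrow> real" and G :: "real^'m \<Rightarrow> real^'m" and H :: "real^'m^'m"
  assumes S: "open S" "a \<in> S"
    and dU: "\<And>y. y \<in> S \<Longrightarrow> (U has_derivative (\<lambda>h. G y \<bullet> h)) (at y)"
    and dG: "(G has_derivative (\<lambda>h. H *v h)) (at a)"
  shows "((\<lambda>s. (U (a + s *\<^sub>R v + s *\<^sub>R w) - U (a + s *\<^sub>R v) - U (a + s *\<^sub>R w) + U a) / s^2)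
           \<longlongrightarrow> w \<bullet> (H *v v)) (at 0)"
  unfolding LIM_eq
proof (intro allI impI)
  fix r :: real assume "r > 0"
  define C where "C = (norm v + 2 * norm w) * norm w + 1"
  define \<epsilon> where "\<epsilon> = r / (2 * C)"
  have "C > 0" unfolding C_def by (simp add: add_nonneg_pos)
  then have "\<epsilon> > 0" unfolding \<epsilon>_def using \<open>r > 0\<close> by simp
  then obtain d where "d > 0"
    and rem: "\<And>y. norm (y - a) < d \<Longrightarrow> norm (G y - G a - H *v (y - a)) \<le> \<epsilon> * norm (y - a)"
    using dG unfolding has_derivative_at_alt by blast
  obtain d1 where "d1 > 0" "ball a d1 \<subseteq> S" using S open_contains_ball by blast
  define \<delta> where "\<delta> = min d d1 / (norm v + norm w + 1)"
  have "\<delta> > 0" unfolding \<delta>_def using \<open>d > 0\<close> \<open>d1 > 0\<close> by (simp add: add_nonneg_pos)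
  moreover have "\<bar>(U (a + s *\<^sub>R v + s *\<^sub>R w) - U (a + s *\<^sub>R v) - U (a + s *\<^sub>R w) + U a) / s^2
      - w \<bullet> (H *v v)\<bar> < r" if "s \<noteq> 0" "\<bar>s\<bar> < \<delta>" for s
  proof -
    have "0 < norm v + norm w + 1" by (simp add: add_nonneg_pos)
    then have "\<bar>s\<bar> * (norm v + norm w + 1) < min d d1"
      using \<open>\<bar>s\<bar> < \<delta>\<close> unfolding \<delta>_def by (simp add: pos_less_divide_eq)
    then have s: "\<bar>s\<bar> * (norm v + norm w) < min d d1"
      using abs_ge_zero[of s] by (auto simp: distrib_left)
    have inS: "a + s *\<^sub>R v + t *\<^sub>R w \<in> S \<and> a + t *\<^sub>R w \<in> S" if "\<bar>t\<bar> \<le> \<bar>s\<bar>" for t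
    proof -
      have "a + y \<in> S" if "norm y < d1" for y
        using that \<open>ball a d1 \<subseteq> S\<close> by (auto simp: dist_norm subset_iff)
      then show ?thesis
        using norm_scaleR_add_le[OF that, of v w] norm_scaleR_add_le[OF that, of 0 w] s
          mult_left_mono[of "norm w" "norm v + norm w" "\<bar>s\<bar>"] by (simp add: add.assoc)
    qed
    have "\<bar>(U (a + s *\<^sub>R v + s *\<^sub>R w) - U (a + s *\<^sub>R v) - U (a + s *\<^sub>R w) + U a) / s^2
        - w \<bullet> (H *v v)\<bar> \<le> \<epsilon> * ((norm v + 2 * norm w) * norm w)"
      using s \<open>\<epsilon> > 0\<close> \<open>s \<noteq> 0\<close>
      by (intro second_difference_quotient_error[OF dU inS] rem) auto
    also have "\<dots> < \<epsilon> * C" unfolding C_def using \<open>\<epsilon> > 0\<close> by simp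
    also have "\<dots> < r" unfolding \<epsilon>_def using \<open>C > 0\<close> \<open>r > 0\<close> by simp
    finally show ?thesis .
  qed
  ultimately show "\<exists>\<delta>>0. \<forall>s. s \<noteq> 0 \<and> norm (s - 0) < \<delta> \<longrightarrow>
      norm ((U (a + s *\<^sub>R v + s *\<^sub>R w) - U (a + s *\<^sub>R v) - U (a + s *\<^sub>R w) + U a) / s^2
        - w \<bullet> (H *v v)) < r"
    by auto
qed

theorem hessian_symmetric:
  fixes U :: "real^'m \<Rightarrow> real" and G :: "real^'m \<Rightarrow> real^'m" and H :: "real^'m^'m"
  assumes "open S" "a \<in> S"
    and "\<And>y. y \<in> S \<Longrightarrow> (U has_derivative (\<lambda>h. G y \<bullet> h)) (at y)"
    and "(G has_derivative (\<lambda>h. H *v h)) (at a)"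
  shows "v \<bullet> (H *v w) = w \<bullet> (H *v v)"
proof -
  have swap: "(\<lambda>s. (U (a + s *\<^sub>R w + s *\<^sub>R v) - U (a + s *\<^sub>R w) - U (a + s *\<^sub>R v) + U a) / s^2)
      = (\<lambda>s::real. (U (a + s *\<^sub>R v + s *\<^sub>R w) - U (a + s *\<^sub>R v) - U (a + s *\<^sub>R w) + U a) / s^2)"
    by (simp add: algebra_simps)
  show ?thesis
    by (rule tendsto_unique[OF _ second_difference_limit[OF assms, of w v, unfolded swap]
          second_difference_limit[OF assms, of v w]]) simp
qed

lemma has_real_derivative_inner_on_line:
  fixes G :: "real^'m \<Rightarrow> real^'m" and H :: "real^'m^'m"
  assumes "(G has_derivative (\<lambda>h. H *v h)) (at x0)"
  shows "((\<lambda>s. G (x0 + s *\<^sub>R e) \<bullet> e) has_real_derivative e \<bullet> (H *v e)) (at 0)"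
proof -
  have "((\<lambda>s. x0 + s *\<^sub>R e) has_derivative (\<lambda>s. s *\<^sub>R e)) (at 0)"
    by (auto intro!: derivative_eq_intros)
  moreover have "(G has_derivative (\<lambda>h. H *v h)) (at (x0 + 0 *\<^sub>R e))" using assms by simp
  ultimately have "((G \<circ> (\<lambda>s. x0 + s *\<^sub>R e)) has_derivative ((\<lambda>h. H *v h) \<circ> (\<lambda>s. s *\<^sub>R e))) (at 0)"
    by (rule diff_chain_at)
  from has_derivative_inner_left[OF this, of e]
  have "((\<lambda>s. G (x0 + s *\<^sub>R e) \<bullet> e) has_derivative (\<lambda>s. s * (e \<bullet> (H *v e)))) (at 0)"
    by (simp add: comp_def matrix_vector_mult_scaleR inner_commute[of "H *v e" e])
  then show ?thesis by (simp add: has_field_derivative_def mult_commute_abs)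
qed

lemma unit_add_scaleR_nonzero:
  fixes x0 e :: "'a::real_normed_vector"
  assumes "norm x0 = 1" "\<bar>s\<bar> * norm e < 1"
  shows "x0 + s *\<^sub>R e \<noteq> 0"
proof
  assume "x0 + s *\<^sub>R e = 0"
  then have "x0 = - (s *\<^sub>R e)" by (simp add: eq_neg_iff_add_eq_0)
  then show False using assms by simp
qed

lemma second_derivative_nonpos_at_max:
  fixes g g' :: "real \<Rightarrow> real"
  assumes "d > 0" and max: "\<And>s. \<bar>s\<bar> < d \<Longrightarrow> g s \<le> g 0"
    and dg: "\<And>s. \<bar>s\<bar> < d \<Longrightarrow> (g has_real_derivative g' s) (at s)"
    and "g' 0 = 0" and "(g' has_real_derivative c) (at 0)"
  shows "c \<le> 0"
proof (rule ccontr)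
  assume "\<not> c \<le> 0"
  then obtain d' where "d' > 0" and inc: "\<And>h. h > 0 \<Longrightarrow> h < d' \<Longrightarrow> g' 0 < g' h"
    using DERIV_pos_inc_right[OF assms(5)] by force
  define h where "h = min d d' / 2"
  have h: "h > 0" "h < d" "h < d'" unfolding h_def using \<open>d > 0\<close> \<open>d' > 0\<close> by auto
  have "(g has_real_derivative g' x) (at x)" if "0 \<le> x" "x \<le> h" for x
    using dg that h by simp
  then obtain z where "0 < z" "z < h" "g h - g 0 = (h - 0) * g' z"
    using MVT2[OF h(1)] by blast
  moreover have "g' z > 0" using inc[of z] calculation h \<open>g' 0 = 0\<close> by simp
  then have "h * g' z > 0" using h(1) by simp
  ultimately have "g h > g 0" by simp
  then show False using max[of h] h by simp
qed

section \<open>Solutions touching from above\<close>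

lemma C2_sphere_has_derivative:
  assumes "C2_sphere u" "y \<noteq> 0"
  shows "(sph_ext u has_derivative (\<lambda>h. ext_grad u y \<bullet> h)) (at y)"
    and "(ext_grad u has_derivative (\<lambda>h. ext_hess u y *v h)) (at y)"
  using assms unfolding C2_sphere_def
  by (auto intro: has_derivative_sph_ext has_derivative_ext_grad)

lemma C2_sphere_continuous_on: "C2_sphere u \<Longrightarrow> continuous_on (sphere 0 1) u"
proof -
  assume "C2_sphere u"
  have "isCont (sph_ext u) y" if "y \<in> sphere 0 1" for y
  proof -
    have "y \<noteq> 0" using that by auto
    then show ?thesis
      using has_derivative_continuous[OF C2_sphere_has_derivative(1)[OF \<open>C2_sphere u\<close>]] by blast
  qed
  then have "continuous_on (sphere 0 1) (sph_ext u)"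
    by (rule continuous_at_imp_continuous_on[OF ballI])
  then show ?thesis by (rule continuous_on_eq) (simp add: sph_ext_def)
qed

text \<open>The matrix of \<nabla>^2 u + u I on the tangent space: the covariant Hessian of the sphere is
  the ambient Hessian of the extension corrected by the radial derivative.\<close>
definition sph_matrix :: "(real^'m::finite \<Rightarrow> real) \<Rightarrow> real^'m \<Rightarrow> real^'m^'m" where
  "sph_matrix u x = ext_hess u x + (u x - ext_grad u x \<bullet> x) *\<^sub>R mat 1"

lemma sph_A_eq_sph_matrix: "sph_A u x v w = v \<bullet> (sph_matrix u x *v w)"
  unfolding sph_A_def sph_hess_def sph_matrix_def
  by (simp add: matrix_vector_mult_add_rdistrib scaleR_matrix_vector_assoc[symmetric] inner_add_right
      algebra_simps)

lemma sph_matrix_symmetric: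
  assumes "C2_sphere u" "x \<noteq> 0"
  shows "v \<bullet> (sph_matrix u x *v w) = w \<bullet> (sph_matrix u x *v v)"
proof -
  have "v \<bullet> (ext_hess u x *v w) = w \<bullet> (ext_hess u x *v v)"
    by (rule hessian_symmetric[of "- {0}" x "sph_ext u" "ext_grad u"])
      (use assms C2_sphere_has_derivative[OF assms(1)] in auto)
  then show ?thesis
    unfolding sph_A_eq_sph_matrix[symmetric] sph_A_def sph_hess_def by (simp add: inner_commute)
qed

lemma sph_eigs_eigenframe:
  fixes u :: "real^'m \<Rightarrow> real"
  assumes "C2_sphere u" "x \<in> sphere 0 1"
  obtains e where "tangent_frame x e"
    "\<forall>i\<in>{1..CARD('m) - 1}. \<forall>j\<in>{1..CARD('m) - 1}.
       e i \<bullet> (sph_matrix u x *v e j) = (if i = j then sph_eigs u x i else 0)"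
proof -
  have "norm x = 1" "x \<noteq> 0" using assms(2) by auto
  obtain lam e where "tangent_frame x e" "\<forall>i\<in>{1..CARD('m) - 1}. \<forall>j\<in>{1..CARD('m) - 1}.
      e i \<bullet> (sph_matrix u x *v e j) = (if i = j then lam i else 0)"
    by (rule exists_tangent_eigenframe[OF \<open>norm x = 1\<close> sph_matrix_symmetric[OF assms(1) \<open>x \<noteq> 0\<close>]])
  then have "\<exists>lam e. tangent_frame x e \<and> (\<forall>i\<in>{1..CARD('m) - 1}. \<forall>j\<in>{1..CARD('m) - 1}.
      sph_A u x (e i) (e j) = (if i = j then lam i else 0))"
    unfolding sph_A_eq_sph_matrix by blast
  then have "\<exists>e. tangent_frame x e \<and> (\<forall>i\<in>{1..CARD('m) - 1}. \<forall>j\<in>{1..CARD('m) - 1}.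
      sph_A u x (e i) (e j) = (if i = j then sph_eigs u x i else 0))"
    unfolding sph_eigs_def by (rule someI_ex)
  then show ?thesis using that unfolding sph_A_eq_sph_matrix by blast
qed

lemma touching_gradient:
  assumes Cu: "C2_sphere u" and Cv: "C2_sphere v" and x0: "x0 \<in> sphere 0 1"
    and le: "\<And>y. y \<noteq> 0 \<Longrightarrow> sph_ext u y \<le> t * sph_ext v y" and eq: "u x0 = t * v x0"
  shows "ext_grad u x0 = t *\<^sub>R ext_grad v x0"
proof -
  let ?G = "ext_grad u x0 - t *\<^sub>R ext_grad v x0"
  have "x0 \<noteq> 0" using x0 by auto
  have "((\<lambda>y. sph_ext u y - t * sph_ext v y) has_derivative (\<lambda>h. ?G \<bullet> h)) (at x0)"
    using C2_sphere_has_derivative(1)[OF Cu \<open>x0 \<noteq> 0\<close>] C2_sphere_has_derivative(1)[OF Cv \<open>x0 \<noteq> 0\<close>]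
    by (auto intro!: derivative_eq_intros simp: inner_diff_left)
  moreover have "\<forall>y\<in>- {0}. sph_ext u y - t * sph_ext v y \<le> sph_ext u x0 - t * sph_ext v x0"
    using le eq x0 by (simp add: sph_ext_def)
  ultimately have "(\<lambda>h. ?G \<bullet> h) = (\<lambda>h. 0)"
    using \<open>x0 \<noteq> 0\<close> by (intro differential_zero_maxmin[of x0 "- {0}"]) auto
  from fun_cong[OF this, of ?G] show ?thesis by simp
qed

lemma touching_hessian:
  assumes Cu: "C2_sphere u" and Cv: "C2_sphere v" and x0: "x0 \<in> sphere 0 1"
    and le: "\<And>y. y \<noteq> 0 \<Longrightarrow> sph_ext u y \<le> t * sph_ext v y" and eq: "u x0 = t * v x0"
  shows "sph_A u x0 e e \<le> t * sph_A v x0 e e"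
proof -
  define G where "G y = ext_grad u y - t *\<^sub>R ext_grad v y" for y
  define H where "H = ext_hess u x0 - t *\<^sub>R ext_hess v x0"
  define dl where "dl = 1 / (norm e + 1)"
  have "dl > 0" unfolding dl_def by (simp add: add_nonneg_pos)
  have nz: "x0 + s *\<^sub>R e \<noteq> 0" if "\<bar>s\<bar> < dl" for s
  proof (rule unit_add_scaleR_nonzero)
    show "norm x0 = 1" using x0 by simp
    have "\<bar>s\<bar> * (norm e + 1) < 1"
      using that unfolding dl_def by (simp add: less_divide_eq add_nonneg_pos)
    then show "\<bar>s\<bar> * norm e < 1" using abs_ge_zero[of s] by (simp add: distrib_left)
  qed
  have dW: "((\<lambda>y. sph_ext u y - t * sph_ext v y) has_derivative (\<lambda>h. G y \<bullet> h)) (at y)" if "y \<noteq> 0" for y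
    using C2_sphere_has_derivative(1)[OF Cu that] C2_sphere_has_derivative(1)[OF Cv that]
    unfolding G_def by (auto intro!: derivative_eq_intros simp: inner_diff_left)
  have "x0 \<noteq> 0" using x0 by auto
  have dG: "(G has_derivative (\<lambda>h. H *v h)) (at x0)"
    using C2_sphere_has_derivative(2)[OF Cu \<open>x0 \<noteq> 0\<close>] C2_sphere_has_derivative(2)[OF Cv \<open>x0 \<noteq> 0\<close>]
    unfolding G_def H_def
    by (auto intro!: derivative_eq_intros simp: matrix_vector_mult_diff_rdistrib scaleR_matrix_vector_assoc)
  have "G x0 = 0" unfolding G_def using touching_gradient[OF assms] by simp
  from has_real_derivative_inner_on_line[OF dG, of e]
  have "e \<bullet> (H *v e) \<le> 0"
  proof (rule second_derivative_nonpos_at_max[OF \<open>dl > 0\<close>, rotated 3])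
    show "sph_ext u (x0 + s *\<^sub>R e) - t * sph_ext v (x0 + s *\<^sub>R e)
        \<le> sph_ext u (x0 + 0 *\<^sub>R e) - t * sph_ext v (x0 + 0 *\<^sub>R e)" if "\<bar>s\<bar> < dl" for s
      using le[OF nz[OF that]] eq x0 by (simp add: sph_ext_def)
    show "((\<lambda>s. sph_ext u (x0 + s *\<^sub>R e) - t * sph_ext v (x0 + s *\<^sub>R e)) has_real_derivative
        G (x0 + s *\<^sub>R e) \<bullet> e) (at s)" if "\<bar>s\<bar> < dl" for s
      using dW[OF nz[OF that]] by (rule has_real_derivative_on_line[where p = x0])
  qed (simp add: \<open>G x0 = 0\<close>)
  moreover have "sph_A u x0 e e - t * sph_A v x0 e e
      = e \<bullet> (H *v e) - (G x0 \<bullet> x0) * (e \<bullet> e) + (u x0 - t * v x0) * (e \<bullet> e)"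
    unfolding sph_A_def sph_hess_def G_def H_def
    by (simp add: inner_diff_left inner_diff_right matrix_vector_mult_diff_rdistrib
        scaleR_matrix_vector_assoc[symmetric] algebra_simps)
  ultimately show ?thesis using \<open>G x0 = 0\<close> eq by simp
qed

lemma esym_Lam_ratio_cmult:
  assumes "l \<le> k" "t \<noteq> 0"
  shows "esym k (Lam (\<lambda>i. t * mu i)) M / esym l (Lam (\<lambda>i. t * mu i)) M
    = t ^ (k - l) * (esym k (Lam mu) M / esym l (Lam mu) M)"
proof -
  have "Lam (\<lambda>i. t * mu i) = (\<lambda>S. t * Lam mu S)"
    unfolding Lam_def by (simp add: sum_distrib_left)
  then show ?thesis using assms by (simp add: esym_cmult power_diff)
qed

theorem esym_ratio_le_at_touching:
  fixes u v :: "real^'m \<Rightarrow> real"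
  assumes Cu: "C2_sphere u" and Cv: "C2_sphere v" and x0: "x0 \<in> sphere 0 1" and "t > 0"
    and le: "\<And>y. y \<noteq> 0 \<Longrightarrow> sph_ext u y \<le> t * sph_ext v y" and eq: "u x0 = t * v x0"
    and Gu: "in_Gamma k (Lam (sph_eigs u x0)) (multi_indices (CARD('m) - 1) P)" and "l < k"
  shows "esym k (Lam (sph_eigs u x0)) (multi_indices (CARD('m) - 1) P)
      / esym l (Lam (sph_eigs u x0)) (multi_indices (CARD('m) - 1) P)
    \<le> t ^ (k - l) * (esym k (Lam (sph_eigs v x0)) (multi_indices (CARD('m) - 1) P)
      / esym l (Lam (sph_eigs v x0)) (multi_indices (CARD('m) - 1) P))"
proof -
  obtain e where te: "tangent_frame x0 e" and de: "\<forall>i\<in>{1..CARD('m) - 1}. \<forall>j\<in>{1..CARD('m) - 1}.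
      e i \<bullet> (sph_matrix u x0 *v e j) = (if i = j then sph_eigs u x0 i else 0)"
    by (rule sph_eigs_eigenframe[OF Cu x0])
  obtain f where tf: "tangent_frame x0 f" and df: "\<forall>i\<in>{1..CARD('m) - 1}. \<forall>j\<in>{1..CARD('m) - 1}.
      f i \<bullet> (sph_matrix v x0 *v f j) = (if i = j then sph_eigs v x0 i else 0)"
    by (rule sph_eigs_eigenframe[OF Cv x0])
  have df': "\<forall>i\<in>{1..CARD('m) - 1}. \<forall>j\<in>{1..CARD('m) - 1}.
      f i \<bullet> ((t *\<^sub>R sph_matrix v x0) *v f j) = (if i = j then t * sph_eigs v x0 i else 0)"
    using df by (simp add: scaleR_matrix_vector_assoc[symmetric])
  have le': "w \<bullet> (sph_matrix u x0 *v w) \<le> w \<bullet> ((t *\<^sub>R sph_matrix v x0) *v w)" for w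
    using touching_hessian[OF Cu Cv x0 le eq, of w]
    by (simp add: sph_A_eq_sph_matrix scaleR_matrix_vector_assoc[symmetric])
  have "norm x0 = 1" using x0 by simp
  have "card {i\<in>{1..CARD('m) - 1}. c \<le> sph_eigs u x0 i}
      \<le> card {j\<in>{1..CARD('m) - 1}. c \<le> t * sph_eigs v x0 j}" for c
    by (rule card_eigenvalues_ge_mono[OF te tf de df' \<open>norm x0 = 1\<close> le'])
  then have "esym k (Lam (sph_eigs u x0)) (multi_indices (CARD('m) - 1) P)
      / esym l (Lam (sph_eigs u x0)) (multi_indices (CARD('m) - 1) P)
    \<le> esym k (Lam (\<lambda>i. t * sph_eigs v x0 i)) (multi_indices (CARD('m) - 1) P)
      / esym l (Lam (\<lambda>i. t * sph_eigs v x0 i)) (multi_indices (CARD('m) - 1) P)"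
    using in_Gamma_Lam_mono[where mu = "\<lambda>j. t * sph_eigs v x0 j", OF _ Gu \<open>l < k\<close>] by blast
  then show ?thesis using esym_Lam_ratio_cmult \<open>t > 0\<close> \<open>l < k\<close> by simp
qed

lemma rhs_cmult:
  fixes t a g e p c :: real
  assumes "t > 0" "a > 0"
  shows "(t * a) powr (p - 1) * ((t * a)^2 + (t * g)^2) powr e * c
    = t powr (p - 1 + 2 * e) * (a powr (p - 1) * (a^2 + g^2) powr e * c)"
proof -
  have "(t * a)^2 + (t * g)^2 = t powr 2 * (a^2 + g^2)"
    using assms(1) by (simp add: power_mult_distrib distrib_left powr_realpow)
  then have "((t * a)^2 + (t * g)^2) powr e = (t powr 2) powr e * (a^2 + g^2) powr e"
    by (simp add: powr_mult)
  also have "\<dots> = t powr (2 * e) * (a^2 + g^2) powr e" by (simp add: powr_powr)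
  finally have "((t * a)^2 + (t * g)^2) powr e = t powr (2 * e) * (a^2 + g^2) powr e" .
  moreover have "(t * a) powr (p - 1) = t powr (p - 1) * a powr (p - 1)"
    using assms by (simp add: powr_mult)
  ultimately show ?thesis by (simp add: powr_add)
qed

lemma exists_touching_multiple:
  fixes u v :: "real^'m \<Rightarrow> real"
  assumes "continuous_on (sphere 0 1) u" "continuous_on (sphere 0 1) v"
    and vpos: "\<forall>x\<in>sphere 0 1. v x > 0" and x1: "x1 \<in> sphere 0 1" "v x1 < u x1"
  obtains x0 t where "x0 \<in> sphere 0 1" "t > 1" "u x0 = t * v x0"
    "\<And>y. y \<noteq> 0 \<Longrightarrow> sph_ext u y \<le> t * sph_ext v y"
proof -
  have "continuous_on (sphere 0 1) (\<lambda>x. u x / v x)"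
    using assms(1,2) vpos by (intro continuous_intros) auto
  then have "\<exists>x0\<in>sphere 0 1. \<forall>x\<in>sphere 0 1. u x / v x \<le> u x0 / v x0"
    using x1(1) by (intro continuous_attains_sup) auto
  then obtain x0 where x0: "x0 \<in> sphere 0 1" and max: "\<And>x. x \<in> sphere 0 1 \<Longrightarrow> u x / v x \<le> u x0 / v x0"
    by blast
  define t where "t = u x0 / v x0"
  have "1 < u x1 / v x1" using x1 vpos by simp
  also have "\<dots> \<le> t" unfolding t_def by (rule max[OF x1(1)])
  finally have "t > 1" .
  moreover have "v x0 > 0" using vpos x0 by blast
  then have "u x0 = t * v x0" unfolding t_def by simp
  moreover have "sph_ext u y \<le> t * sph_ext v y" if "y \<noteq> 0" for y
  proof -
    have "y /\<^sub>R norm y \<in> sphere 0 1" using that by simp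
    then show ?thesis
      using max[of "y /\<^sub>R norm y"] vpos unfolding sph_ext_def t_def by (simp add: divide_le_eq)
  qed
  ultimately show ?thesis using that x0 by blast
qed

theorem solution_le_solution:
  fixes u v phi :: "real^'m \<Rightarrow> real"
  assumes "l < k" and "p > q - real l" and phi: "\<forall>x\<in>sphere 0 1. phi x > 0"
    and uadm: "admissible P k u" and usol: "solves_eq P k l p q phi u"
    and vpos: "\<forall>x\<in>sphere 0 1. v x > 0" and vadm: "admissible P k v" and vsol: "solves_eq P k l p q phi v"
  shows "\<forall>x\<in>sphere 0 1. u x \<le> v x"
proof (rule ccontr)
  let ?M = "multi_indices (CARD('m) - 1) P"
  let ?F = "\<lambda>w x. w x powr (p - 1) * ((w x)\<^sup>2 + (norm (sph_grad w x))\<^sup>2) powr ((real k + 1 - q) / 2) * phi x"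
  have Cu: "C2_sphere u" and Cv: "C2_sphere v" using uadm vadm unfolding admissible_def by auto
  assume "\<not> (\<forall>x\<in>sphere 0 1. u x \<le> v x)"
  then obtain x1 where "x1 \<in> sphere 0 1" "v x1 < u x1" by auto
  then obtain x0 t where x0: "x0 \<in> sphere 0 1" and "t > 1" and eq: "u x0 = t * v x0"
    and le: "\<And>y. y \<noteq> 0 \<Longrightarrow> sph_ext u y \<le> t * sph_ext v y"
    using exists_touching_multiple[OF C2_sphere_continuous_on[OF Cu] C2_sphere_continuous_on[OF Cv] vpos]
    by blast
  have "v x0 > 0" using vpos x0 by blast
  have "esym k (Lam (sph_eigs u x0)) ?M / esym l (Lam (sph_eigs u x0)) ?M
      \<le> t ^ (k - l) * (esym k (Lam (sph_eigs v x0)) ?M / esym l (Lam (sph_eigs v x0)) ?M)"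
    using uadm x0 \<open>t > 1\<close> \<open>l < k\<close> unfolding admissible_def
    by (intro esym_ratio_le_at_touching[OF Cu Cv x0 _ le eq]) auto
  moreover have "esym k (Lam (sph_eigs u x0)) ?M / esym l (Lam (sph_eigs u x0)) ?M = ?F u x0"
    and "esym k (Lam (sph_eigs v x0)) ?M / esym l (Lam (sph_eigs v x0)) ?M = ?F v x0"
    using usol vsol x0 unfolding solves_eq_def by blast+
  ultimately have Fu_le: "?F u x0 \<le> t ^ (k - l) * ?F v x0" by (simp only:)
  have grad: "norm (sph_grad u x0) = t * norm (sph_grad v x0)"
    using touching_gradient[OF Cu Cv x0 le eq] \<open>t > 1\<close> unfolding sph_grad_def by simp
  have "?F u x0 = t powr (p - 1 + 2 * ((real k + 1 - q) / 2)) * ?F v x0"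
    unfolding eq grad by (intro rhs_cmult) (use \<open>t > 1\<close> \<open>v x0 > 0\<close> in auto)
  also have "p - 1 + 2 * ((real k + 1 - q) / 2) = p + real k - q" by (simp add: field_simps)
  finally have "?F u x0 = t powr (p + real k - q) * ?F v x0" .
  with Fu_le have "t powr (p + real k - q) * ?F v x0 \<le> t ^ (k - l) * ?F v x0" by (simp only:)
  moreover have "?F v x0 > 0" using \<open>v x0 > 0\<close> phi x0 by simp
  ultimately have "t powr (p + real k - q) \<le> t ^ (k - l)" by (rule mult_right_le_imp_le)
  then have "t powr (p + real k - q) \<le> t powr (real (k - l))"
    using \<open>t > 1\<close> by (simp add: powr_realpow)
  then have "p + real k - q \<le> real (k - l)" using \<open>t > 1\<close> by simp
  then show False using \<open>p > q - real l\<close> \<open>l < k\<close> by (simp add: of_nat_diff)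
qed

theorem lemma4p5:
  fixes P k l :: nat and p q :: real and phi :: "real^'m::finite \<Rightarrow> real"
    and u v :: "real^'m \<Rightarrow> real"
  assumes "CARD('m) - 1 \<ge> 2"
    and "1 < P" and "P \<le> (CARD('m) - 1) - 1"
    and "l < k" and "k \<le> (CARD('m) - 1) choose P"
    and "p > q - real l"
    and "continuous_on (sphere 0 1) phi" and "\<forall>x\<in>sphere 0 1. phi x > 0"
    and "\<forall>x\<in>sphere 0 1. u x > 0" and "admissible P k u" and "solves_eq P k l p q phi u"
    and "\<forall>x\<in>sphere 0 1. v x > 0" and "admissible P k v" and "solves_eq P k l p q phi v"
  shows "\<forall>x\<in>sphere 0 1. u x = v x"
  using solution_le_solution[OF assms(4,6,8,10,11,12,13,14)]
    solution_le_solution[OF assms(4,6,8,13,14,9,10,11)]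
  by (simp add: order_antisym)

end
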